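(* Fix one of the types I–V with data $J$, $(\phi_j)$, $(n_j)$ as in the context, and let $H$ be continuous on $\mathbb{R}$. Let $i\in J$. Then there exists a unique local solution $\mathbf{x}(s)$ (defined for $s$ near $0$) of $$\mathbf{x}''(s)^\perp\cdot\mathbf{x}'(s)+\sum_{j\in J}\frac{n_j\,\mathbf{e}(\phi_j)\cdot\mathbf{x}'(s)}{\mathbf{e}(\phi_j)^\perp\cdot\mathbf{x}(s)}=(n-1)H(s),\qquad \|\mathbf{x}'(s)\|^2=1,$$ satisfying the initial conditions $$\mathbf{e}(\phi_i)^\perp\cdot\mathbf{x}(0)=0,\qquad \mathbf{x}(0)\neq\mathbf{0},\qquad \mathbf{x}'(0)=\mathbf{e}\!\left(\phi_i+\tfrac{\pi}{2}\right).$$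
   Context: For $\mathbf{a}=(a,b)\in\mathbb{R}^2$ write $\mathbf{a}^\perp=(-b,a)$; $\mathbf{e}(\phi)=(\cos\phi,\sin\phi)$, $\mathbf{e}(\phi)^\perp=(-\sin\phi,\cos\phi)$. Type data ($\sum_j n_j=n-2$): Type I: $J=\{0\}$, $\phi_0=0$, $n_0=n-2$, $n\ge3$. Type II: $J=\{0,1\}$, $\phi_0=0$, $\phi_1=\pi/2$, $n_0=m$, $n_1=\ell$ ($n=\ell+m+2$, $\ell,m\in\mathbb{N}$). Type III: $J=\{-1,0,1\}$, $\phi_j=j\pi/3$, $n_j\equiv c$ with $c\in\{1,2,4,8\}$ ($n=5,8,14,26$). Type IV: $J=\{-1,0,1,2\}$, $\phi_j=j\pi/4$, $n_{\pm1}=\ell$, $n_0=n_2=k$, $(k,\ell)\in\{(2,2),(5,4),(9,6),(m-2,1),(2m-3,2),(4m-5,4)\}$. Type V: $J=\{-2,\dots,3\}$, $\phi_j=j\pi/6$, $n_j\equiv c$ with $c\in\{1,2\}$. The equation is singular where $\mathbf{e}(\phi_j)^\perp\cdot\mathbf{x}=0$ for some $j$; the initial point lies on such a line. *)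

theory Defs
  imports "HOL-Analysis.Analysis"
begin

definition evec :: "real \<Rightarrow> real \<times> real" where
  "evec \<phi> = (cos \<phi>, sin \<phi>)"

definition perp :: "real \<times> real \<Rightarrow> real \<times> real" where
  "perp v = (- snd v, fst v)"

definition type_data :: "int set \<Rightarrow> (int \<Rightarrow> real) \<Rightarrow> (int \<Rightarrow> nat) \<Rightarrow> nat \<Rightarrow> bool" where
  "type_data J \<phi> nj n \<longleftrightarrow>
     n = 2 + (\<Sum>j\<in>J. nj j) \<and>
     ( \<comment> \<open>Type I\<close>
       (J = {0} \<and> \<phi> 0 = 0 \<and> n \<ge> 3)
     \<or> \<comment> \<open>Type II\<close>
       (J = {0, 1} \<and> \<phi> 0 = 0 \<and> \<phi> 1 = pi / 2 \<and> nj 0 \<ge> 1 \<and> nj 1 \<ge> 1)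
     \<or> \<comment> \<open>Type III\<close>
       (J = {-1, 0, 1} \<and> (\<forall>j\<in>J. \<phi> j = real_of_int j * pi / 3) \<and>
        (\<exists>c\<in>{1, 2, 4, 8}. \<forall>j\<in>J. nj j = c))
     \<or> \<comment> \<open>Type IV\<close>
       (J = {-1, 0, 1, 2} \<and> (\<forall>j\<in>J. \<phi> j = real_of_int j * pi / 4) \<and>
        (\<exists>k l. nj (-1) = l \<and> nj 1 = l \<and> nj 0 = k \<and> nj 2 = k \<and>
           ((k, l) \<in> {(2, 2), (5, 4), (9, 6)} \<or>
            (k \<ge> 1 \<and> (\<exists>m::int. (int k, int l) \<in> {(m - 2, 1), (2 * m - 3, 2), (4 * m - 5, 4)})))))
     \<or> \<comment> \<open>Type V\<close>
       (J = {-2..3} \<and> (\<forall>j\<in>J. \<phi> j = real_of_int j * pi / 6) \<and>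
        (\<exists>c\<in>{1, 2}. \<forall>j\<in>J. nj j = c)))"

definition is_local_solution ::
  "int set \<Rightarrow> (int \<Rightarrow> real) \<Rightarrow> (int \<Rightarrow> nat) \<Rightarrow> nat \<Rightarrow> (real \<Rightarrow> real) \<Rightarrow> int \<Rightarrow>
   real \<times> real \<Rightarrow> real \<Rightarrow> (real \<Rightarrow> real \<times> real) \<Rightarrow> bool" where
  "is_local_solution J \<phi> nj n H i x0 \<epsilon> x \<longleftrightarrow>
     \<epsilon> > 0 \<and> x 0 = x0 \<and>
     (\<exists>x' x''.
        (\<forall>s\<in>{-\<epsilon><..<\<epsilon>}. (x has_vector_derivative x' s) (at s) \<and>
                              (x' has_vector_derivative x'' s) (at s)) \<and>
        continuous_on {-\<epsilon><..<\<epsilon>} x'' \<and>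
        x' 0 = evec (\<phi> i + pi / 2) \<and>
        (\<forall>s\<in>{-\<epsilon><..<\<epsilon>}. (norm (x' s))\<^sup>2 = 1) \<and>
        (\<forall>s\<in>{-\<epsilon><..<\<epsilon>}. s \<noteq> 0 \<longrightarrow>
           (\<forall>j\<in>J. perp (evec (\<phi> j)) \<bullet> x s \<noteq> 0) \<and>
           perp (x'' s) \<bullet> x' s
             + (\<Sum>j\<in>J. real (nj j) * (evec (\<phi> j) \<bullet> x' s) / (perp (evec (\<phi> j)) \<bullet> x s))
             = (real n - 1) * H s))"

end

theory Submission
  imports Defs
begin

text \<open>
  Write the unit velocity as x' = evec (\<theta>0 + u) with \<theta>0 = \<phi> i + \<pi>/2, and the curve in the
  frame dir = evec (\<phi> i), nor = perp dir as x = X dir + Y nor, so that X' = - sin u, Y' = cos u,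
  X 0 = r0 and Y 0 = 0. Near x0 only the term of line i is singular; with N = nj i it equals
  N sin u / Y, and Y s is close to s. The equation becomes u' + N u / s = h, where h collects the
  regular terms of the other lines and H together with the defect N (u / s - sin u / Y), which
  is of order s^2. With u 0 = 0 this is the fixed point equation
  u s = s^(-N) \<integral> t^N h t dt (over [0, s]), whose right-hand side is a contraction
  on continuous angles with |u s| \<le> K |s| over a short interval. The fixed point is the
  solution, and the angle of any solution is such a fixed point, which gives uniqueness.
\<close>

lemma abs_diff_le_deriv_bound:
  fixes f f' :: "real \<Rightarrow> real"
  assumes "\<And>t. t \<in> {min a b..max a b} \<Longrightarrow> (f has_real_derivative f' t) (at t within {min a b..max a b})"
    and "\<And>t. t \<in> {min a b..max a b} \<Longrightarrow> \<bar>f' t\<bar> \<le> B"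
  shows "\<bar>f b - f a\<bar> \<le> B * \<bar>b - a\<bar>"
  using field_differentiable_bound[of "{min a b..max a b}" f f' B b a] assms by auto

lemma abs_diff_at_0_le_deriv_bound:
  fixes f f' :: "real \<Rightarrow> real"
  assumes "\<And>\<tau>. \<tau> \<in> {-d..d} \<Longrightarrow> (f has_real_derivative f' \<tau>) (at \<tau> within {-d..d})"
    and "t \<in> {-d..d}"
    and "\<And>\<tau>. \<bar>\<tau>\<bar> \<le> \<bar>t\<bar> \<Longrightarrow> \<bar>f' \<tau>\<bar> \<le> B"
  shows "\<bar>f t - f 0\<bar> \<le> B * \<bar>t\<bar>"
proof -
  have sub: "{min 0 t..max 0 t} \<subseteq> {-d..d}" using assms(2) by auto
  have "\<bar>f t - f 0\<bar> \<le> B * \<bar>t - 0\<bar>"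
  proof (rule abs_diff_le_deriv_bound)
    fix \<tau> assume "\<tau> \<in> {min 0 t..max 0 t}"
    thus "(f has_real_derivative f' \<tau>) (at \<tau> within {min 0 t..max 0 t})"
      using DERIV_subset[OF assms(1) sub] sub by blast
    show "\<bar>f' \<tau>\<bar> \<le> B" using assms(3) \<open>\<tau> \<in> {min 0 t..max 0 t}\<close> by auto
  qed
  thus ?thesis by simp
qed

lemma abs_cos_diff_le: "\<bar>cos a - cos b\<bar> \<le> \<bar>a - b\<bar>" for a b :: real
  using abs_diff_le_deriv_bound[of b a cos "\<lambda>t. - sin t" 1]
  by (force intro!: derivative_eq_intros)

lemma abs_sin_diff_le: "\<bar>sin a - sin b\<bar> \<le> \<bar>a - b\<bar>" for a b :: real
  using abs_diff_le_deriv_bound[of b a sin cos 1]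
  by (force intro!: derivative_eq_intros)

lemma one_minus_cos_le: "1 - cos x \<le> x\<^sup>2 / 2" for x :: real
proof -
  have "(sin (x/2))\<^sup>2 \<le> (x/2)\<^sup>2"
    using abs_sin_x_le_abs_x[of "x/2"] by (metis abs_ge_zero power2_abs power_mono)
  thus ?thesis using cos_double_sin[of "x/2"] by (simp add: power_divide)
qed

lemma abs_sin_minus_id_diff_le:
  fixes a b M :: real
  assumes "\<bar>a\<bar> \<le> M" "\<bar>b\<bar> \<le> M"
  shows "\<bar>(sin a - a) - (sin b - b)\<bar> \<le> M\<^sup>2 / 2 * \<bar>a - b\<bar>"
proof (rule abs_diff_le_deriv_bound[where f="\<lambda>t. sin t - t" and f'="\<lambda>t. cos t - 1"])
  fix t assume t: "t \<in> {min b a..max b a}"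
  show "((\<lambda>t. sin t - t) has_real_derivative cos t - 1) (at t within {min b a..max b a})"
    by (auto intro!: derivative_eq_intros)
  have "t\<^sup>2 \<le> M\<^sup>2" using t assms by (simp add: abs_le_square_iff[symmetric]) linarith
  thus "\<bar>cos t - 1\<bar> \<le> M\<^sup>2 / 2" using one_minus_cos_le[of t] by simp
qed

lemma abs_sin_minus_id_le: "\<bar>sin a - a\<bar> \<le> \<bar>a\<bar> ^ 3 / 2" for a :: real
  using abs_sin_minus_id_diff_le[of a "\<bar>a\<bar>" 0] by (simp add: power2_eq_square power3_eq_cube)

lemma abs_divide_diff_le:
  fixes a1 a2 b1 b2 m :: real
  assumes "m > 0" "\<bar>b1\<bar> \<ge> m" "\<bar>b2\<bar> \<ge> m"
  shows "\<bar>a1/b1 - a2/b2\<bar> \<le> \<bar>a1 - a2\<bar>/m + \<bar>a2\<bar> * \<bar>b1 - b2\<bar> / m\<^sup>2"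
proof -
  have b1: "b1 \<noteq> 0" and b2: "b2 \<noteq> 0" using assms by auto
  have eq: "a1/b1 - a2/b2 = (a1 - a2)/b1 + a2 * (b2 - b1)/(b1*b2)"
    using b1 b2 by (simp add: field_simps)
  have "\<bar>(a1 - a2)/b1\<bar> \<le> \<bar>a1 - a2\<bar>/m"
    using assms by (simp add: abs_divide divide_left_mono)
  moreover have "\<bar>a2 * (b2 - b1)/(b1*b2)\<bar> \<le> \<bar>a2\<bar> * \<bar>b1 - b2\<bar> / m\<^sup>2"
  proof -
    have "m\<^sup>2 \<le> \<bar>b1*b2\<bar>" using assms
      by (simp add: abs_mult power2_eq_square mult_mono)
    hence "\<bar>a2 * (b2 - b1)\<bar> / \<bar>b1*b2\<bar> \<le> \<bar>a2 * (b2 - b1)\<bar> / m\<^sup>2"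
      using assms b1 b2 by (intro divide_left_mono) (auto simp: abs_mult)
    thus ?thesis by (simp add: abs_divide abs_mult abs_minus_commute)
  qed
  ultimately show ?thesis unfolding eq by (meson abs_triangle_ineq add_mono order_trans)
qed

lemma sin_int_mult_pi_divide_neq_0:
  fixes m :: int and k :: real
  assumes "m \<noteq> 0" "\<bar>m\<bar> < k"
  shows "sin (m * pi / k) \<noteq> 0"
proof -
  have k: "k > 0" using assms by linarith
  have "\<bar>m\<bar> * pi / k < pi" using assms k by (simp add: divide_less_eq)
  moreover have "0 < \<bar>m\<bar> * pi / k" using assms k by simp
  ultimately have "sin (\<bar>m\<bar> * pi / k) > 0" by (rule sin_gt_zero[rotated])
  thus ?thesis by (cases "m \<ge> 0") auto
qed

lemma continuous_within_0_if_abs_le: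
  fixes f :: "real \<Rightarrow> real"
  assumes "f 0 = 0" "\<And>x. x \<in> S \<Longrightarrow> \<bar>f x\<bar> \<le> C * \<bar>x\<bar> ^ k" "k > 0"
  shows "continuous (at 0 within S) f"
proof -
  have "(f \<longlongrightarrow> 0) (at 0 within S)"
  proof (rule Lim_null_comparison)
    show "\<forall>\<^sub>F x in at 0 within S. norm (f x) \<le> C * \<bar>x\<bar> ^ k"
      using assms(2) by (auto simp: eventually_at_filter)
    have "((\<lambda>x. C * \<bar>x\<bar> ^ k) \<longlongrightarrow> C * \<bar>0\<bar> ^ k) (at 0 within S)"
      by (intro tendsto_intros)
    thus "((\<lambda>x. C * \<bar>x\<bar> ^ k) \<longlongrightarrow> 0) (at 0 within S)" using assms(3) by (simp add: zero_power)
  qed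
  thus ?thesis using assms(1) by (simp add: continuous_within)
qed

lemma inner_evec_evec: "evec a \<bullet> evec b = cos (b - a)"
  by (simp add: evec_def inner_prod_def cos_diff)

lemma inner_perp_evec_evec: "perp (evec a) \<bullet> evec b = sin (b - a)"
  by (simp add: evec_def perp_def inner_prod_def sin_diff algebra_simps)

lemma norm_evec [simp]: "norm (evec a) = 1"
  by (simp add: evec_def norm_prod_def)

lemma perp_evec: "perp (evec a) = evec (a + pi/2)"
  by (simp add: evec_def perp_def cos_add sin_add)

lemma evec_add_pi_half_add: "evec (a + pi/2 + t) = - sin t *\<^sub>R evec a + cos t *\<^sub>R perp (evec a)"
  by (simp add: evec_def perp_def cos_add sin_add algebra_simps)

lemma norm_perp [simp]: "norm (perp v) = norm v"
  by (simp add: perp_def norm_prod_def)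

lemma perp_inner_self [simp]: "perp v \<bullet> v = 0"
  by (simp add: perp_def inner_prod_def)

lemma perp_inner_perp [simp]: "perp v \<bullet> perp w = v \<bullet> w"
  by (simp add: perp_def inner_prod_def)

lemma perp_perp [simp]: "perp (perp v) = - v"
  by (cases v) (simp add: perp_def)

lemma perp_inner_swap: "perp v \<bullet> w = - (v \<bullet> perp w)"
  by (simp add: perp_def inner_prod_def)

lemma perp_scaleR: "perp (c *\<^sub>R v) = c *\<^sub>R perp v"
  by (simp add: perp_def)

lemma abs_inner_le_1_if_unit: "norm p = 1 \<Longrightarrow> norm q = 1 \<Longrightarrow> \<bar>p \<bullet> q\<bar> \<le> 1"
  using Cauchy_Schwarz_ineq2[of p q] by simp

lemma unit_eq_if_inner_eq_1:
  fixes v w :: "real \<times> real"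
  assumes "norm v = 1" "norm w = 1" "v \<bullet> w = 1"
  shows "v = w"
proof -
  have "(v - w) \<bullet> (v - w) = v \<bullet> v - 2 * (v \<bullet> w) + w \<bullet> w"
    by (simp add: inner_diff_left inner_diff_right inner_commute)
  also have "\<dots> = 0" using assms by (simp add: dot_square_norm)
  finally show ?thesis by simp
qed

lemma unit_decomp:
  assumes "norm e = 1"
  shows "v = (e \<bullet> v) *\<^sub>R e + (perp e \<bullet> v) *\<^sub>R perp e"
proof -
  obtain a b where e: "e = (a, b)" by (cases e)
  obtain c d where v: "v = (c, d)" by (cases v)
  have "a\<^sup>2 + b\<^sup>2 = 1" using assms e by (simp add: norm_prod_def)
  then show ?thesis unfolding e v
    by (simp add: perp_def inner_prod_def algebra_simps power2_eq_square)
       (metis (no_types, opaque_lifting) add.commute distrib_left mult.commute mult.left_commute mult_1_right)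
qed

lemma has_vector_derivative_evec:
  assumes "(f has_real_derivative f') (at s)"
  shows "((\<lambda>s. evec (f s)) has_vector_derivative f' *\<^sub>R perp (evec (f s))) (at s)"
proof -
  have "((\<lambda>t. (cos (f t), sin (f t))) has_vector_derivative (- sin (f s) * f', cos (f s) * f')) (at s)"
    using DERIV_fun_cos[OF assms] DERIV_fun_sin[OF assms]
    by (intro has_vector_derivative_Pair) (auto simp: has_real_derivative_iff_has_vector_derivative)
  thus ?thesis by (simp add: evec_def perp_def algebra_simps)
qed

lemma has_real_derivative_inner:
  fixes f g :: "real \<Rightarrow> real \<times> real"
  assumes "(f has_vector_derivative f') (at s)" "(g has_vector_derivative g') (at s)"
  shows "((\<lambda>t. f t \<bullet> g t) has_real_derivative f s \<bullet> g' + f' \<bullet> g s) (at s)"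
  using bounded_bilinear.has_vector_derivative[OF bounded_bilinear_inner assms]
  by (simp add: has_real_derivative_iff_has_vector_derivative)

lemma unit_field_derivative_eq:
  assumes "open S" "s \<in> S" "\<And>t. t \<in> S \<Longrightarrow> norm (v t) = 1"
    and "(v has_vector_derivative a) (at s)"
  shows "a = (perp (v s) \<bullet> a) *\<^sub>R perp (v s)"
proof -
  have "((\<lambda>t. v t \<bullet> v t) has_real_derivative v s \<bullet> a + a \<bullet> v s) (at s)"
    by (rule has_real_derivative_inner[OF assms(4) assms(4)])
  moreover have "((\<lambda>t. v t \<bullet> v t) has_real_derivative 0) (at s)"
    by (rule has_field_derivative_transform_within_open[of "\<lambda>_. 1" _ _ S])
       (use assms in \<open>auto simp: dot_square_norm\<close>)
  ultimately have "v s \<bullet> a + a \<bullet> v s = 0" by (rule DERIV_unique)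
  hence "v s \<bullet> a = 0" by (simp add: inner_commute)
  thus ?thesis using unit_decomp[OF assms(3)[OF assms(2)], of a] by simp
qed

definition prim :: "real \<Rightarrow> (real \<Rightarrow> real) \<Rightarrow> real \<Rightarrow> real" where
  "prim d g t = integral {-d..t} g - integral {-d..0} g"

lemma prim_0 [simp]: "prim d g 0 = 0"
  by (simp add: prim_def)

lemma has_real_derivative_prim:
  assumes "continuous_on {-d..d} g" "t \<in> {-d..d}"
  shows "(prim d g has_real_derivative g t) (at t within {-d..d})"
proof -
  have "((\<lambda>x. integral {-d..x} g - integral {-d..0} g) has_real_derivative g t - 0) (at t within {-d..d})"
    by (intro DERIV_diff integral_has_real_derivative assms DERIV_const)
  thus ?thesis by (simp add: prim_def[abs_def])
qed

lemma has_real_derivative_prim_at: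
  assumes "continuous_on {-d..d} g" "t \<in> {-d<..<d}"
  shows "(prim d g has_real_derivative g t) (at t)"
  using has_real_derivative_prim[OF assms(1), of t] assms(2) at_within_Icc_at[of "-d" t d] by auto

lemma continuous_on_prim: "continuous_on {-d..d} g \<Longrightarrow> continuous_on {-d..d} (prim d g)"
  by (rule DERIV_continuous_on[OF has_real_derivative_prim])

lemma prim_cong: "(\<And>t. t \<in> {-d..d} \<Longrightarrow> g1 t = g2 t) \<Longrightarrow> s \<in> {-d..d} \<Longrightarrow> prim d g1 s = prim d g2 s"
  unfolding prim_def by (intro arg_cong2[where f=minus] integral_cong) auto

lemma unit_field_eq_evec_angle:
  fixes v a :: "real \<Rightarrow> real \<times> real"
  assumes e: "0 < e" "e < \<epsilon>"
    and der: "\<And>s. s \<in> {-\<epsilon><..<\<epsilon>} \<Longrightarrow> (v has_vector_derivative a s) (at s)"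
    and cont: "continuous_on {-\<epsilon><..<\<epsilon>} a"
    and unit: "\<And>s. s \<in> {-\<epsilon><..<\<epsilon>} \<Longrightarrow> norm (v s) = 1"
    and v0: "v 0 = evec \<theta>" and s: "s \<in> {-e<..<e}"
  shows "v s = evec (\<theta> + prim e (\<lambda>t. perp (v t) \<bullet> a t) s)"
proof -
  define c where "c t = perp (v t) \<bullet> a t" for t
  define g where "g t = v t \<bullet> evec (\<theta> + prim e c t)" for t
  have "continuous_on {-\<epsilon><..<\<epsilon>} v"
    using der by (intro continuous_at_imp_continuous_on ballI has_vector_derivative_continuous)
  hence "continuous_on {-\<epsilon><..<\<epsilon>} c"
    unfolding c_def[abs_def] perp_def by (intro continuous_intros cont)
  hence cont_c: "continuous_on {-e..e} c" by (rule continuous_on_subset) (use e in auto)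
  have "(g has_real_derivative 0) (at t within {-e<..<e})" if t: "t \<in> {-e<..<e}" for t
  proof -
    have t\<epsilon>: "t \<in> {-\<epsilon><..<\<epsilon>}" using t e by auto
    have "((\<lambda>t. \<theta> + prim e c t) has_real_derivative c t) (at t)"
      using DERIV_add[OF DERIV_const has_real_derivative_prim_at[OF cont_c t]] by simp
    hence "(g has_real_derivative v t \<bullet> (c t *\<^sub>R perp (evec (\<theta> + prim e c t))) + a t \<bullet> evec (\<theta> + prim e c t)) (at t)"
      unfolding g_def[abs_def] by (rule has_real_derivative_inner[OF der[OF t\<epsilon>] has_vector_derivative_evec])
    moreover have "a t = c t *\<^sub>R perp (v t)"
      unfolding c_def by (rule unit_field_derivative_eq[OF _ t\<epsilon> unit der[OF t\<epsilon>]]) simp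
    ultimately show ?thesis
      by (simp add: has_field_derivative_at_within perp_inner_swap[of "v t"] inner_commute)
  qed
  then obtain C where "\<And>t. t \<in> {-e<..<e} \<Longrightarrow> g t = C"
    using has_field_derivative_zero_constant[of "{-e<..<e}" g] by auto
  moreover have "g 0 = 1" by (simp add: g_def v0 dot_square_norm)
  ultimately have "g s = 1" using s e by force
  thus ?thesis using unit[of s] s e unfolding g_def c_def[abs_def]
    by (intro unit_eq_if_inner_eq_1) auto
qed

lemma exists_abs_prim_le:
  assumes "continuous_on {-d..d} g"
  shows "\<exists>B. \<forall>t\<in>{-d..d}. \<bar>prim d g t\<bar> \<le> B * \<bar>t\<bar>"
proof -
  have "bounded (g ` {-d..d})"
    by (intro compact_imp_bounded compact_continuous_image assms compact_Icc)
  then obtain B where B: "\<And>t. t \<in> {-d..d} \<Longrightarrow> \<bar>g t\<bar> \<le> B"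
    unfolding bounded_iff by fastforce
  have "\<bar>prim d g t\<bar> \<le> B * \<bar>t\<bar>" if t: "t \<in> {-d..d}" for t
  proof -
    have "\<bar>g \<tau>\<bar> \<le> B" if "\<bar>\<tau>\<bar> \<le> \<bar>t\<bar>" for \<tau>
      using that t by (intro B) auto
    thus ?thesis using abs_diff_at_0_le_deriv_bound[OF has_real_derivative_prim[OF assms] t, of B] by simp
  qed
  thus ?thesis by blast
qed

lemma abs_weighted_quotient_le:
  fixes f g :: "real \<Rightarrow> real" and N :: nat
  assumes "\<And>\<tau>. \<tau> \<in> {-d..d} \<Longrightarrow> (f has_real_derivative \<tau>^N * g \<tau>) (at \<tau> within {-d..d})"
    and "f 0 = 0" and "\<And>\<tau>. \<tau> \<in> {-d..d} \<Longrightarrow> \<bar>g \<tau>\<bar> \<le> B" and s: "s \<in> {-d..d}"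
  shows "\<bar>f s / s^N\<bar> \<le> B * \<bar>s\<bar>"
proof (cases "s = 0")
  case True thus ?thesis using assms(2) by (cases N) auto
next
  case False
  have "\<bar>f s - f 0\<bar> \<le> (\<bar>s\<bar>^N * B) * \<bar>s\<bar>"
  proof (rule abs_diff_at_0_le_deriv_bound[OF assms(1) s])
    fix \<tau> assume tau: "\<bar>\<tau>\<bar> \<le> \<bar>s\<bar>"
    hence "\<tau> \<in> {-d..d}" using s by auto
    hence "\<bar>\<tau>\<bar>^N * \<bar>g \<tau>\<bar> \<le> \<bar>s\<bar>^N * B"
      using assms(3) tau by (intro mult_mono power_mono) auto
    thus "\<bar>\<tau>^N * g \<tau>\<bar> \<le> \<bar>s\<bar>^N * B" by (simp add: abs_mult power_abs)
  qed
  with False assms(2) show ?thesis by (simp add: abs_divide power_abs field_simps)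
qed

lemma weighted_primitive_eq:
  fixes U P h :: "real \<Rightarrow> real" and N :: nat
  assumes "continuous_on {-d..d} U" "U 0 = 0"
    and "\<And>t. t \<in> {-d<..<d} \<Longrightarrow> t \<noteq> 0 \<Longrightarrow> (U has_real_derivative h t - N * U t / t) (at t)"
    and "\<And>t. t \<in> {-d..d} \<Longrightarrow> (P has_real_derivative t^N * h t) (at t within {-d..d})"
    and "P 0 = 0" and s: "s \<in> {-d..d}"
  shows "s ^ N * U s = P s"
proof -
  define Z where "Z t = t ^ N * U t - P t" for t
  have Z': "(Z has_real_derivative 0) (at t)" if t: "t \<in> {-d<..<d}" "t \<noteq> 0" for t
  proof -
    have "(P has_real_derivative t ^ N * h t) (at t)"
      using assms(4)[of t] t at_within_Icc_at[of "-d" t d] by auto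
    hence "(Z has_real_derivative (N * t ^ (N - Suc 0)) * U t + (h t - N * U t / t) * t ^ N - t ^ N * h t) (at t)"
      unfolding Z_def[abs_def] by (intro DERIV_diff DERIV_mult DERIV_pow assms(3) t)
    moreover have "(N * t ^ (N - Suc 0)) * U t + (h t - N * U t / t) * t ^ N - t ^ N * h t = 0"
      using t by (cases N) (auto simp: field_simps)
    ultimately show ?thesis by simp
  qed
  have contZ: "continuous_on {-d..d} Z"
    unfolding Z_def[abs_def]
    by (intro continuous_intros assms(1) DERIV_continuous_on[of _ _ "\<lambda>t. t^N * h t"] assms(4))
  have Z0: "Z 0 = 0" using assms(2,5) by (cases N) (auto simp: Z_def)
  consider "s = 0" | "0 < s" | "s < 0" by linarith
  hence "Z s = 0"
  proof cases
    case 2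
    have "Z s = Z 0"
      by (rule DERIV_isconst_end[OF 2 continuous_on_subset[OF contZ]]) (use s in \<open>auto intro!: Z'\<close>)
    thus ?thesis using Z0 by simp
  next
    case 3
    have "Z 0 = Z s"
      by (rule DERIV_isconst_end[OF 3 continuous_on_subset[OF contZ]]) (use s in \<open>auto intro!: Z'\<close>)
    thus ?thesis using Z0 by simp
  qed (use Z0 in simp)
  thus ?thesis by (simp add: Z_def)
qed

lemma has_real_derivative_weighted_quotient:
  fixes P :: "real \<Rightarrow> real" and N :: nat
  assumes "(P has_real_derivative s^N * h) (at s)" "s \<noteq> 0"
  shows "((\<lambda>t. P t / t^N) has_real_derivative h - N * (P s / s^N) / s) (at s)"
proof -
  have "((\<lambda>t. P t / t^N) has_real_derivative
       (s^N * h * s^N - P s * (N * s^(N - Suc 0))) / (s^N * s^N)) (at s)"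
    by (rule DERIV_divide[OF assms(1) DERIV_pow]) (use assms(2) in simp)
  moreover have "(s^N * h * s^N - P s * (N * s^(N - Suc 0))) / (s^N * s^N) = h - N * (P s / s^N) / s"
    using assms(2) by (cases N) (auto simp: field_simps)
  ultimately show ?thesis by simp
qed

lemma weighted_quotient_tendsto:
  fixes P h :: "real \<Rightarrow> real" and N :: nat
  assumes "\<And>\<tau>. \<tau> \<in> {-d..d} \<Longrightarrow> (P has_real_derivative \<tau>^N * h \<tau>) (at \<tau> within {-d..d})"
    and "P 0 = 0" and "continuous_on {-d..d} h" and "0 < d"
  shows "((\<lambda>s. P s / s ^ Suc N) \<longlongrightarrow> h 0 / (N + 1)) (at 0)"
  unfolding LIM_eq
proof (intro allI impI)
  fix r :: real assume r: "r > 0"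
  define L where "L = h 0 / (N + 1)"
  have "0 \<in> {-d..d}" using assms(4) by simp
  then obtain \<rho>0 where \<rho>0: "\<rho>0 > 0"
    and h\<rho>: "\<And>\<tau>. \<tau> \<in> {-d..d} \<Longrightarrow> dist \<tau> 0 < \<rho>0 \<Longrightarrow> dist (h \<tau>) (h 0) < r/2"
    using assms(3) r unfolding continuous_on_iff by (meson half_gt_zero)
  show "\<exists>\<rho>>0. \<forall>s. s \<noteq> 0 \<and> norm (s - 0) < \<rho> \<longrightarrow> norm (P s / s ^ Suc N - L) < r"
  proof (intro exI[of _ "min \<rho>0 d"] conjI allI impI)
    fix s :: real assume s: "s \<noteq> 0 \<and> norm (s - 0) < min \<rho>0 d"
    define a where "a = \<bar>s\<bar>"
    have sub: "{-a..a} \<subseteq> {-d..d}" using s by (auto simp: a_def)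
    define R where "R t = P t - L * t ^ Suc N" for t
    have "\<bar>R s / s^N\<bar> \<le> r/2 * \<bar>s\<bar>"
    proof (rule abs_weighted_quotient_le[where g="\<lambda>t. h t - h 0" and d=a])
      fix \<tau> assume tau: "\<tau> \<in> {-a..a}"
      have "(R has_real_derivative \<tau>^N * h \<tau> - L * (Suc N * \<tau> ^ (Suc N - Suc 0))) (at \<tau> within {-a..a})"
        unfolding R_def[abs_def]
        by (intro DERIV_diff DERIV_cmult DERIV_pow DERIV_subset[OF assms(1) sub])
           (use tau sub in auto)
      moreover have "\<tau>^N * h \<tau> - L * (Suc N * \<tau> ^ (Suc N - Suc 0)) = \<tau>^N * h \<tau> - (L * Suc N) * \<tau>^N"
        by (simp add: mult.assoc)
      also have "\<dots> = \<tau>^N * (h \<tau> - h 0)"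
        by (simp add: L_def right_diff_distrib mult.commute)
      ultimately show "(R has_real_derivative \<tau>^N * (h \<tau> - h 0)) (at \<tau> within {-a..a})"
        by simp
      show "\<bar>h \<tau> - h 0\<bar> \<le> r/2"
        using h\<rho>[of \<tau>] tau sub s by (force simp: dist_real_def a_def)
    qed (auto simp: R_def assms(2) a_def)
    moreover have "P s / s ^ Suc N - L = R s / s^N / s"
      using s by (simp add: R_def field_simps)
    ultimately have "\<bar>P s / s ^ Suc N - L\<bar> \<le> r/2"
      using s by (simp add: abs_divide abs_mult divide_le_eq mult_ac)
    thus "norm (P s / s ^ Suc N - L) < r" using r by simp
  qed (use \<rho>0 assms(4) in auto)
qed

section \<open>The equation in the frame of the initial line\<close>

locale ivp =
  fixes J :: "int set" and \<phi> :: "int \<Rightarrow> real" and nj :: "int \<Rightarrow> nat" and n :: nat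
    and H :: "real \<Rightarrow> real" and i :: int and x0 :: "real \<times> real"
  assumes finite_J: "finite J" and i_in_J: "i \<in> J" and continuous_H: "continuous_on UNIV H"
    and x0_on_line: "perp (evec (\<phi> i)) \<bullet> x0 = 0" and x0_nonzero: "x0 \<noteq> 0"
    and transversal: "\<And>j. j \<in> J \<Longrightarrow> j \<noteq> i \<Longrightarrow> perp (evec (\<phi> j)) \<bullet> evec (\<phi> i) \<noteq> 0"
begin

definition "dir = evec (\<phi> i)"
definition "nor = perp dir"
definition "r0 = dir \<bullet> x0"
definition "\<theta>0 = \<phi> i + pi/2"
definition "Ni = real (nj i)"

definition "other_terms X Y a = (\<Sum>j\<in>J-{i}. real (nj j) * (evec (\<phi> j) \<bullet> evec (\<theta>0 + a)) /
                                 (perp (evec (\<phi> j)) \<bullet> (X *\<^sub>R dir + Y *\<^sub>R nor)))"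
definition "regular_rhs t X Y a = other_terms X Y a - (real n - 1) * H t"

text \<open>At x0 the denominator of line j is r0 (perp (evec (\<phi> j)) \<bullet> dir), nonzero by
  transversality; \<mu> is half the smallest of these, so all of them stay above \<mu> on the
  square near_x0.\<close>

definition "\<mu> = (if J - {i} = {} then 1 else Min ((\<lambda>j. \<bar>r0 * (perp (evec (\<phi> j)) \<bullet> dir)\<bar> / 2) ` (J - {i})))"
definition "near_x0 X Y \<longleftrightarrow> \<bar>X - r0\<bar> \<le> \<mu>/2 \<and> \<bar>Y\<bar> \<le> \<mu>/2"
definition "other_bound = (\<Sum>j\<in>J-{i}. real (nj j)) / \<mu>"
definition "other_lip = (\<Sum>j\<in>J-{i}. real (nj j)) * (1/\<mu> + 1/\<mu>\<^sup>2)"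
definition "H_bound = (SOME B. B \<ge> 0 \<and> (\<forall>t\<in>{-1..1}. \<bar>H t\<bar> \<le> B))"
definition "rhs_bound = other_bound + \<bar>real n - 1\<bar> * H_bound"

lemma norm_dir [simp]: "norm dir = 1" and norm_nor [simp]: "norm nor = 1"
  by (simp_all add: dir_def nor_def)

lemma inner_dir_nor [simp]: "dir \<bullet> nor = 0" "nor \<bullet> dir = 0" "dir \<bullet> dir = 1" "nor \<bullet> nor = 1"
  by (simp_all add: nor_def dot_square_norm inner_commute[of dir])

lemma nor_eq: "nor = perp (evec (\<phi> i))"
  by (simp add: nor_def dir_def)

lemma frame_decomp: "v = (dir \<bullet> v) *\<^sub>R dir + (nor \<bullet> v) *\<^sub>R nor"
  unfolding nor_def by (rule unit_decomp) simp

lemma x0_eq: "x0 = r0 *\<^sub>R dir"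
  using frame_decomp[of x0] x0_on_line by (simp add: r0_def nor_eq)

lemma r0_nonzero: "r0 \<noteq> 0"
  using x0_eq x0_nonzero by auto

lemma inner_dir_evec_\<theta>0: "dir \<bullet> evec (\<theta>0 + a) = - sin a"
  by (simp add: dir_def inner_evec_evec \<theta>0_def cos_add)

lemma \<mu>_pos: "\<mu> > 0"
proof (cases "J - {i} = {}")
  case False
  have "\<forall>j\<in>J-{i}. \<bar>r0 * (perp (evec (\<phi> j)) \<bullet> dir)\<bar> / 2 > 0"
    using transversal r0_nonzero by (auto simp: dir_def)
  thus ?thesis using False finite_J by (simp add: \<mu>_def)
qed (simp add: \<mu>_def)

lemma \<mu>_le:
  assumes "j \<in> J - {i}"
  shows "2 * \<mu> \<le> \<bar>r0 * (perp (evec (\<phi> j)) \<bullet> dir)\<bar>"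
proof -
  have "Min ((\<lambda>j. \<bar>r0 * (perp (evec (\<phi> j)) \<bullet> dir)\<bar> / 2) ` (J - {i})) \<le> \<bar>r0 * (perp (evec (\<phi> j)) \<bullet> dir)\<bar> / 2"
    using assms finite_J by (intro Min_le) auto
  thus ?thesis using assms by (auto simp: \<mu>_def)
qed

lemma inner_perp_frame:
  "perp (evec (\<phi> j)) \<bullet> (X *\<^sub>R dir + Y *\<^sub>R nor) = X * (perp (evec (\<phi> j)) \<bullet> dir) + Y * (perp (evec (\<phi> j)) \<bullet> nor)"
  by (simp add: inner_add_right)

lemma abs_inner_perp_frame_le: "\<bar>perp (evec (\<phi> j)) \<bullet> dir\<bar> \<le> 1" "\<bar>perp (evec (\<phi> j)) \<bullet> nor\<bar> \<le> 1"
  by (auto intro!: abs_inner_le_1_if_unit)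

lemma denominator_ge_\<mu>:
  assumes j: "j \<in> J - {i}" and "near_x0 X Y"
  shows "\<bar>perp (evec (\<phi> j)) \<bullet> (X *\<^sub>R dir + Y *\<^sub>R nor)\<bar> \<ge> \<mu>"
proof -
  let ?a = "perp (evec (\<phi> j)) \<bullet> dir" and ?b = "perp (evec (\<phi> j)) \<bullet> nor"
  have "\<bar>(X - r0) * ?a\<bar> \<le> \<mu>/2" "\<bar>Y * ?b\<bar> \<le> \<mu>/2"
    using assms(2) abs_inner_perp_frame_le[of j] \<mu>_pos unfolding near_x0_def abs_mult
    by (metis abs_ge_zero mult_left_le mult.commute order_trans)+
  moreover have "X * ?a + Y * ?b = r0 * ?a + (X - r0) * ?a + Y * ?b" by (simp add: algebra_simps)
  ultimately have "\<bar>X * ?a + Y * ?b\<bar> \<ge> \<mu>" using \<mu>_le[OF j] by linarith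
  thus ?thesis by (simp add: inner_perp_frame)
qed

lemma abs_other_terms_le:
  assumes "near_x0 X Y"
  shows "\<bar>other_terms X Y a\<bar> \<le> other_bound"
proof -
  have "\<bar>other_terms X Y a\<bar> \<le> (\<Sum>j\<in>J-{i}. \<bar>real (nj j) * (evec (\<phi> j) \<bullet> evec (\<theta>0 + a)) /
                       (perp (evec (\<phi> j)) \<bullet> (X *\<^sub>R dir + Y *\<^sub>R nor))\<bar>)"
    unfolding other_terms_def by (rule sum_abs)
  also have "\<dots> \<le> (\<Sum>j\<in>J-{i}. real (nj j) / \<mu>)"
  proof (rule sum_mono)
    fix j assume j: "j \<in> J - {i}"
    have "\<bar>evec (\<phi> j) \<bullet> evec (\<theta>0 + a)\<bar> \<le> 1" by (rule abs_inner_le_1_if_unit) auto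
    hence "\<bar>real (nj j) * (evec (\<phi> j) \<bullet> evec (\<theta>0 + a))\<bar> \<le> real (nj j)"
      by (simp add: abs_mult mult_left_le)
    thus "\<bar>real (nj j) * (evec (\<phi> j) \<bullet> evec (\<theta>0 + a)) / (perp (evec (\<phi> j)) \<bullet> (X *\<^sub>R dir + Y *\<^sub>R nor))\<bar>
          \<le> real (nj j) / \<mu>"
      using denominator_ge_\<mu>[OF j assms] \<mu>_pos by (simp add: abs_divide frac_le)
  qed
  also have "\<dots> = other_bound" by (simp add: other_bound_def sum_divide_distrib)
  finally show ?thesis .
qed

lemma abs_other_terms_diff_le:
  assumes "near_x0 X1 Y1" "near_x0 X2 Y2"
  shows "\<bar>other_terms X1 Y1 a1 - other_terms X2 Y2 a2\<bar> \<le> other_lip * (\<bar>X1 - X2\<bar> + \<bar>Y1 - Y2\<bar> + \<bar>a1 - a2\<bar>)"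
proof -
  let ?D = "\<bar>X1 - X2\<bar> + \<bar>Y1 - Y2\<bar> + \<bar>a1 - a2\<bar>"
  let ?q = "\<lambda>j a X Y. (evec (\<phi> j) \<bullet> evec (\<theta>0 + a)) / (perp (evec (\<phi> j)) \<bullet> (X *\<^sub>R dir + Y *\<^sub>R nor))"
  have "\<bar>other_terms X1 Y1 a1 - other_terms X2 Y2 a2\<bar> = \<bar>\<Sum>j\<in>J-{i}. real (nj j) * (?q j a1 X1 Y1 - ?q j a2 X2 Y2)\<bar>"
    unfolding other_terms_def by (simp add: sum_subtractf[symmetric] algebra_simps)
  also have "\<dots> \<le> (\<Sum>j\<in>J-{i}. \<bar>real (nj j) * (?q j a1 X1 Y1 - ?q j a2 X2 Y2)\<bar>)"
    by (rule sum_abs)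
  also have "\<dots> \<le> (\<Sum>j\<in>J-{i}. real (nj j) * ((1/\<mu> + 1/\<mu>\<^sup>2) * ?D))"
  proof (rule sum_mono)
    fix j assume j: "j \<in> J - {i}"
    let ?a1 = "evec (\<phi> j) \<bullet> evec (\<theta>0 + a1)" and ?a2 = "evec (\<phi> j) \<bullet> evec (\<theta>0 + a2)"
    let ?b1 = "perp (evec (\<phi> j)) \<bullet> (X1 *\<^sub>R dir + Y1 *\<^sub>R nor)"
    let ?b2 = "perp (evec (\<phi> j)) \<bullet> (X2 *\<^sub>R dir + Y2 *\<^sub>R nor)"
    have "\<bar>?a1 - ?a2\<bar> \<le> \<bar>a1 - a2\<bar>"
      using abs_cos_diff_le[of "\<theta>0 + a1 - \<phi> j" "\<theta>0 + a2 - \<phi> j"] by (simp add: inner_evec_evec)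
    hence A: "\<bar>?a1 - ?a2\<bar>/\<mu> \<le> ?D/\<mu>" using \<mu>_pos by (simp add: divide_right_mono)
    have "?b1 - ?b2 = (X1 - X2) * (perp (evec (\<phi> j)) \<bullet> dir) + (Y1 - Y2) * (perp (evec (\<phi> j)) \<bullet> nor)"
      by (simp add: inner_perp_frame algebra_simps)
    moreover have "\<bar>(X1 - X2) * (perp (evec (\<phi> j)) \<bullet> dir)\<bar> \<le> \<bar>X1 - X2\<bar>"
      "\<bar>(Y1 - Y2) * (perp (evec (\<phi> j)) \<bullet> nor)\<bar> \<le> \<bar>Y1 - Y2\<bar>"
      using abs_inner_perp_frame_le[of j] by (simp_all add: abs_mult mult_left_le)
    ultimately have "\<bar>?b1 - ?b2\<bar> \<le> \<bar>X1 - X2\<bar> + \<bar>Y1 - Y2\<bar>" by linarith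
    moreover have "\<bar>?a2\<bar> \<le> 1" by (rule abs_inner_le_1_if_unit) auto
    ultimately have "\<bar>?a2\<bar> * \<bar>?b1 - ?b2\<bar> \<le> 1 * ?D" by (intro mult_mono) auto
    hence B: "\<bar>?a2\<bar> * \<bar>?b1 - ?b2\<bar> / \<mu>\<^sup>2 \<le> ?D / \<mu>\<^sup>2" using \<mu>_pos by (simp add: divide_right_mono)
    have "\<bar>?a1/?b1 - ?a2/?b2\<bar> \<le> \<bar>?a1 - ?a2\<bar>/\<mu> + \<bar>?a2\<bar> * \<bar>?b1 - ?b2\<bar> / \<mu>\<^sup>2"
      by (rule abs_divide_diff_le[OF \<mu>_pos denominator_ge_\<mu>[OF j assms(1)] denominator_ge_\<mu>[OF j assms(2)]])
    hence "\<bar>?a1/?b1 - ?a2/?b2\<bar> \<le> (1/\<mu> + 1/\<mu>\<^sup>2) * ?D"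
      using A B by (simp add: algebra_simps add_divide_distrib)
    thus "\<bar>real (nj j) * (?q j a1 X1 Y1 - ?q j a2 X2 Y2)\<bar> \<le> real (nj j) * ((1/\<mu> + 1/\<mu>\<^sup>2) * ?D)"
      by (simp add: abs_mult mult_left_mono)
  qed
  also have "\<dots> = other_lip * ?D" by (simp add: other_lip_def sum_distrib_right mult.assoc)
  finally show ?thesis .
qed

lemma continuous_on_other_terms:
  fixes T :: "real set"
  assumes "continuous_on T X" "continuous_on T Y" "continuous_on T a"
    and "\<And>t. t \<in> T \<Longrightarrow> near_x0 (X t) (Y t)"
  shows "continuous_on T (\<lambda>t. other_terms (X t) (Y t) (a t))"
proof -
  have ev: "continuous_on T (\<lambda>t. evec (\<theta>0 + a t))"
    unfolding evec_def by (auto intro!: continuous_intros assms(3))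
  have "\<And>j t. j \<in> J - {i} \<Longrightarrow> t \<in> T \<Longrightarrow> perp (evec (\<phi> j)) \<bullet> (X t *\<^sub>R dir + Y t *\<^sub>R nor) \<noteq> 0"
    using denominator_ge_\<mu> assms(4) \<mu>_pos by force
  thus ?thesis unfolding other_terms_def
    by (auto intro!: continuous_intros ev assms(1-3))
qed

lemma H_bound: "H_bound \<ge> 0" "\<And>t. t \<in> {-1..1} \<Longrightarrow> \<bar>H t\<bar> \<le> H_bound"
proof -
  have "compact (H ` {-1..1})"
    by (rule compact_continuous_image) (auto intro: continuous_on_subset[OF continuous_H])
  then obtain B where "\<forall>y\<in>H ` {-1..1}. norm y \<le> B" using compact_imp_bounded bounded_iff by metis
  hence "\<exists>B. B \<ge> 0 \<and> (\<forall>t\<in>{-1..1}. \<bar>H t\<bar> \<le> B)"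
    by (intro exI[of _ "max B 0"]) auto
  from someI_ex[OF this] show "H_bound \<ge> 0" "\<And>t. t \<in> {-1..1} \<Longrightarrow> \<bar>H t\<bar> \<le> H_bound"
    unfolding H_bound_def by auto
qed

lemma other_lip_nonneg: "other_lip \<ge> 0"
  using \<mu>_pos by (simp add: other_lip_def sum_nonneg)

lemma rhs_bound_nonneg: "rhs_bound \<ge> 0"
  using \<mu>_pos H_bound(1) by (simp add: rhs_bound_def other_bound_def sum_nonneg)

lemma abs_regular_rhs_le:
  assumes "near_x0 X Y" "t \<in> {-1..1}"
  shows "\<bar>regular_rhs t X Y a\<bar> \<le> rhs_bound"
proof -
  have "\<bar>(real n - 1) * H t\<bar> \<le> \<bar>real n - 1\<bar> * H_bound"
    using H_bound(2)[OF assms(2)] by (simp add: abs_mult mult_left_mono)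
  thus ?thesis using abs_other_terms_le[OF assms(1), of a] unfolding regular_rhs_def rhs_bound_def by linarith
qed

definition "Yof d u t = prim d (\<lambda>\<tau>. cos (u \<tau>)) t"
definition "Xof d u t = r0 - prim d (\<lambda>\<tau>. sin (u \<tau>)) t"
definition "curve d u s = Xof d u s *\<^sub>R dir + Yof d u s *\<^sub>R nor"
text \<open>At t = 0 both quotients in sin_defect are 0 by the convention x / 0 = 0, which is also
  the continuous extension of the defect.\<close>

definition "sin_defect d u t = sin (u t) / Yof d u t - u t / t"
definition "rhs d u t = - Ni * sin_defect d u t + regular_rhs t (Xof d u t) (Yof d u t) (u t)"
definition "moment d u s = prim d (\<lambda>t. t ^ nj i * rhs d u t) s"
definition "angle_map d u s = moment d u s / s ^ nj i"

definition "lin_bounded K d u \<longleftrightarrow> (\<forall>t\<in>{-d..d}. \<bar>u t\<bar> \<le> K * \<bar>t\<bar>)"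
definition "lip_const K = Ni * (2 * K\<^sup>2 + 4 * K) + 3 * other_lip"

text \<open>K d \<le> 1/2 keeps Y s above |s| / 2 and d \<le> \<mu>/2 keeps the curve near x0; the last two
  conditions bound the defect term by 1 and make the angle map a contraction with factor 1/2.\<close>

definition "admissible K d \<longleftrightarrow> 0 < d \<and> d \<le> 1 \<and> 1 \<le> K \<and> K * d \<le> 1/2 \<and> d \<le> \<mu> / 2 \<and>
     Ni * (2 * K^3 * d\<^sup>2) \<le> 1 \<and> d * lip_const K \<le> 1/2"

lemma lip_const_nonneg: "K \<ge> 0 \<Longrightarrow> lip_const K \<ge> 0"
  using other_lip_nonneg by (simp add: lip_const_def Ni_def)

lemma admissible_exists: "1 \<le> K \<Longrightarrow> \<exists>d0>0. \<forall>d. 0 < d \<and> d \<le> d0 \<longrightarrow> admissible K d"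
proof -
  assume K: "1 \<le> K"
  define d0 where "d0 = Min {1, 1 / (2*K), \<mu>/2, 1 / (2 * K^3 * (Ni + 1)), 1 / (2 * (lip_const K + 1))}"
  have L: "lip_const K \<ge> 0" using lip_const_nonneg K by simp
  have Ni: "Ni \<ge> 0" by (simp add: Ni_def)
  have K3: "K^3 \<ge> 1" and K0: "K \<ge> 0" using K by simp_all
  show ?thesis
  proof (intro exI[of _ d0] conjI allI impI)
    show "d0 > 0" using K \<mu>_pos Ni L by (simp add: d0_def)
    fix d assume d: "0 < d \<and> d \<le> d0"
    have d1: "d \<le> 1" and d2: "d \<le> 1/(2*K)" and d3: "d \<le> \<mu>/2"
      and d4: "d \<le> 1 / (2 * K^3 * (Ni + 1))" and d5: "d \<le> 1 / (2 * (lip_const K + 1))"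
      using d by (auto simp: d0_def)
    have "K * d \<le> 1/2" using d2 K by (simp add: field_simps)
    moreover have "Ni * (2 * K^3 * d\<^sup>2) \<le> 1"
    proof -
      have "Ni * (2 * K^3 * d\<^sup>2) \<le> (Ni + 1) * (2 * K^3 * d)"
        using d d1 K3 K0 Ni by (intro mult_mono) (auto simp: power2_eq_square)
      also have "\<dots> = d * (2 * K^3 * (Ni + 1))" by (simp add: algebra_simps)
      also have "\<dots> \<le> 1"
      proof -
        have "0 < 2 * K^3 * (Ni + 1)" using K Ni by (intro mult_pos_pos) auto
        thus ?thesis using d4 by (simp add: pos_le_divide_eq)
      qed
      finally show ?thesis .
    qed
    moreover have "d * lip_const K \<le> 1/2"
    proof -
      have "d * lip_const K \<le> d * (lip_const K + 1)" using d by simp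
      also have "\<dots> \<le> 1/2" using d5 L by (simp add: field_simps)
      finally show ?thesis .
    qed
    ultimately show "admissible K d" unfolding admissible_def using d d1 d3 K by auto
  qed
qed

lemma inner_dir_curve [simp]: "dir \<bullet> curve d u s = Xof d u s"
  and inner_nor_curve [simp]: "nor \<bullet> curve d u s = Yof d u s"
  by (simp_all add: curve_def inner_add_right)

lemma curve_cong:
  assumes "\<And>t. t \<in> {-d..d} \<Longrightarrow> u t = u' t" "s \<in> {-d..d}"
  shows "curve d u s = curve d u' s"
  using assms prim_cong[of d "\<lambda>t. sin (u t)" "\<lambda>t. sin (u' t)" s]
    prim_cong[of d "\<lambda>t. cos (u t)" "\<lambda>t. cos (u' t)" s]
  by (simp add: curve_def Xof_def Yof_def)

lemma sum_over_lines_eq: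
  "(\<Sum>j\<in>J. real (nj j) * (evec (\<phi> j) \<bullet> evec (\<theta>0 + a)) / (perp (evec (\<phi> j)) \<bullet> y))
     = Ni * (- sin a) / (nor \<bullet> y) + other_terms (dir \<bullet> y) (nor \<bullet> y) a"
proof -
  have "evec (\<phi> i) \<bullet> evec (\<theta>0 + a) = - sin a"
    using inner_dir_evec_\<theta>0 by (simp add: dir_def)
  moreover have "(dir \<bullet> y) *\<^sub>R dir + (nor \<bullet> y) *\<^sub>R nor = y"
    by (rule frame_decomp[symmetric])
  ultimately show ?thesis
    by (simp add: sum.remove[OF finite_J i_in_J] other_terms_def Ni_def nor_eq)
qed

text \<open>For a curve through y with velocity evec (\<theta>0 + a) and acceleration w times the normal,
  the equation determines the angular speed w.\<close>

lemma ode_angle_form: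
  "perp (w *\<^sub>R perp (evec (\<theta>0 + a))) \<bullet> evec (\<theta>0 + a)
     + (\<Sum>j\<in>J. real (nj j) * (evec (\<phi> j) \<bullet> evec (\<theta>0 + a)) / (perp (evec (\<phi> j)) \<bullet> y))
     = (real n - 1) * H s
   \<longleftrightarrow> w = Ni * (- sin a) / (nor \<bullet> y) + other_terms (dir \<bullet> y) (nor \<bullet> y) a - (real n - 1) * H s"
  by (auto simp: sum_over_lines_eq perp_scaleR dot_square_norm)

lemma rhs_sub_eq:
  "rhs d u s - Ni * u s / s
     = Ni * (- sin (u s)) / Yof d u s + other_terms (Xof d u s) (Yof d u s) (u s) - (real n - 1) * H s"
  by (simp add: rhs_def sin_defect_def regular_rhs_def algebra_simps)

end

section \<open>The angle map and its contraction property\<close>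

locale angle = ivp +
  fixes K d :: real and u :: "real \<Rightarrow> real"
  assumes admissible: "admissible K d" and continuous_u: "continuous_on {-d..d} u"
    and lin_bounded: "lin_bounded K d u"
begin

lemma admissibleD: "0 < d" "d \<le> 1" "1 \<le> K" "K * d \<le> 1/2" "d \<le> \<mu> / 2"
  "Ni * (2 * K^3 * d\<^sup>2) \<le> 1" "d * lip_const K \<le> 1/2"
  using admissible by (auto simp: admissible_def)

lemma abs_u_le: "t \<in> {-d..d} \<Longrightarrow> \<bar>u t\<bar> \<le> K * \<bar>t\<bar>"
  using lin_bounded by (auto simp: lin_bounded_def)

lemma u_0: "u 0 = 0"
  using abs_u_le[of 0] admissibleD by simp

lemma K_abs_le:
  assumes "t \<in> {-d..d}"
  shows "K * \<bar>t\<bar> \<le> 1/2"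
proof -
  have "K * \<bar>t\<bar> \<le> K * d" using assms admissibleD(3) by (intro mult_left_mono) auto
  thus ?thesis using admissibleD(4) by linarith
qed

lemma continuous_on_cos_u: "continuous_on {-d..d} (\<lambda>\<tau>. cos (u \<tau>))"
  and continuous_on_sin_u: "continuous_on {-d..d} (\<lambda>\<tau>. sin (u \<tau>))"
  by (intro continuous_intros continuous_u)+

lemma has_real_derivative_Yof:
  "t \<in> {-d..d} \<Longrightarrow> (Yof d u has_real_derivative cos (u t)) (at t within {-d..d})"
  unfolding Yof_def[abs_def] by (rule has_real_derivative_prim[OF continuous_on_cos_u])

lemma has_real_derivative_Xof:
  "t \<in> {-d..d} \<Longrightarrow> (Xof d u has_real_derivative - sin (u t)) (at t within {-d..d})"
  unfolding Xof_def[abs_def]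
  using DERIV_diff[OF DERIV_const has_real_derivative_prim[OF continuous_on_sin_u]] by simp

lemma continuous_on_Yof: "continuous_on {-d..d} (Yof d u)"
  by (rule DERIV_continuous_on[OF has_real_derivative_Yof])

lemma continuous_on_Xof: "continuous_on {-d..d} (Xof d u)"
  by (rule DERIV_continuous_on[OF has_real_derivative_Xof])

lemma Yof_0 [simp]: "Yof d u 0 = 0" and Xof_0 [simp]: "Xof d u 0 = r0"
  by (simp_all add: Yof_def Xof_def)

lemma abs_Yof_le: "t \<in> {-d..d} \<Longrightarrow> \<bar>Yof d u t\<bar> \<le> \<bar>t\<bar>"
  using abs_diff_at_0_le_deriv_bound[OF has_real_derivative_Yof, of t 1] by simp

lemma abs_Xof_minus_r0_le: "t \<in> {-d..d} \<Longrightarrow> \<bar>Xof d u t - r0\<bar> \<le> \<bar>t\<bar>"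
  using abs_diff_at_0_le_deriv_bound[OF has_real_derivative_Xof, of t 1] by simp

lemma abs_Yof_minus_id_le:
  assumes t: "t \<in> {-d..d}"
  shows "\<bar>Yof d u t - t\<bar> \<le> K\<^sup>2 / 2 * \<bar>t\<bar> ^ 3"
proof -
  have "\<bar>(Yof d u t - t) - (Yof d u 0 - 0)\<bar> \<le> (K\<^sup>2 / 2 * t\<^sup>2) * \<bar>t\<bar>"
  proof (rule abs_diff_at_0_le_deriv_bound[where f'="\<lambda>\<tau>. cos (u \<tau>) - 1"])
    show "\<And>\<tau>. \<tau> \<in> {-d..d} \<Longrightarrow> ((\<lambda>t. Yof d u t - t) has_real_derivative cos (u \<tau>) - 1) (at \<tau> within {-d..d})"
      by (intro DERIV_diff has_real_derivative_Yof DERIV_ident)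
    fix \<tau> assume tau: "\<bar>\<tau>\<bar> \<le> \<bar>t\<bar>"
    have "\<tau> \<in> {-d..d}" using tau t by auto
    hence "\<bar>u \<tau>\<bar> \<le> K * \<bar>t\<bar>"
      using abs_u_le admissibleD(3) mult_left_mono[OF tau, of K] by (meson order_trans zero_le_one)
    hence "(u \<tau>)\<^sup>2 \<le> (K * \<bar>t\<bar>)\<^sup>2" by (simp add: abs_le_square_iff[symmetric])
    thus "\<bar>cos (u \<tau>) - 1\<bar> \<le> K\<^sup>2 / 2 * t\<^sup>2"
      using one_minus_cos_le[of "u \<tau>"] by (simp add: power_mult_distrib)
  qed (use t in simp)
  thus ?thesis by (simp add: power2_eq_square power3_eq_cube abs_mult)
qed

lemma abs_Yof_ge: "t \<in> {-d..d} \<Longrightarrow> \<bar>Yof d u t\<bar> \<ge> \<bar>t\<bar> / 2"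
proof -
  assume t: "t \<in> {-d..d}"
  have "(K * \<bar>t\<bar>)\<^sup>2 \<le> (1/2)\<^sup>2" using K_abs_le[OF t] admissibleD(3) by (intro power_mono) auto
  hence "(K\<^sup>2 * t\<^sup>2) * \<bar>t\<bar> \<le> (1/4) * \<bar>t\<bar>"
    by (intro mult_right_mono) (auto simp: power_mult_distrib power_divide)
  moreover have "\<bar>t\<bar> ^ 3 = t\<^sup>2 * \<bar>t\<bar>"
    by (metis power2_abs power3_eq_cube power2_eq_square)
  ultimately have "K\<^sup>2 / 2 * \<bar>t\<bar> ^ 3 \<le> \<bar>t\<bar> / 8" by (simp add: field_simps)
  thus ?thesis using abs_Yof_minus_id_le[OF t] by linarith
qed

lemma Yof_nonzero: "t \<in> {-d..d} \<Longrightarrow> t \<noteq> 0 \<Longrightarrow> Yof d u t \<noteq> 0"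
  using abs_Yof_ge[of t] by auto

lemma near_x0_Xof_Yof:
  assumes "t \<in> {-d..d}"
  shows "near_x0 (Xof d u t) (Yof d u t)"
proof -
  have "\<bar>t\<bar> \<le> \<mu>/2" using assms admissibleD(5) by auto
  thus ?thesis using abs_Xof_minus_r0_le[OF assms] abs_Yof_le[OF assms] by (simp add: near_x0_def)
qed

lemma abs_sin_defect_le:
  assumes t: "t \<in> {-d..d}"
  shows "\<bar>sin_defect d u t\<bar> \<le> 2 * K^3 * t\<^sup>2"
proof (cases "t = 0")
  case False
  let ?a = "u t" and ?Y = "Yof d u t"
  have Y: "?Y \<noteq> 0" using Yof_nonzero[OF t False] .
  have eq: "sin_defect d u t = (t * (sin ?a - ?a) + ?a * (t - ?Y)) / (t * ?Y)"
    using Y False by (simp add: sin_defect_def field_simps)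
  have a: "\<bar>?a\<bar> \<le> K * \<bar>t\<bar>" by (rule abs_u_le[OF t])
  have "\<bar>sin ?a - ?a\<bar> \<le> (K * \<bar>t\<bar>)^3 / 2"
    using abs_sin_minus_id_le[of ?a] power_mono[OF a, of 3] by simp
  hence n1: "\<bar>t * (sin ?a - ?a)\<bar> \<le> \<bar>t\<bar> * ((K * \<bar>t\<bar>)^3 / 2)"
    unfolding abs_mult by (rule mult_left_mono) simp
  have "\<bar>?a\<bar> * \<bar>t - ?Y\<bar> \<le> (K * \<bar>t\<bar>) * (K\<^sup>2 / 2 * \<bar>t\<bar> ^ 3)"
    using abs_Yof_minus_id_le[OF t] a admissibleD(3)
    by (intro mult_mono) (auto simp: abs_minus_commute)
  hence n2: "\<bar>?a * (t - ?Y)\<bar> \<le> (K * \<bar>t\<bar>) * (K\<^sup>2 / 2 * \<bar>t\<bar> ^ 3)"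
    by (simp add: abs_mult)
  have "\<bar>t\<bar> * ((K * \<bar>t\<bar>)^3 / 2) + (K * \<bar>t\<bar>) * (K\<^sup>2 / 2 * \<bar>t\<bar> ^ 3) = K^3 * t\<^sup>2 * t\<^sup>2"
    by (simp add: power2_eq_square power3_eq_cube algebra_simps)
  hence num: "\<bar>t * (sin ?a - ?a) + ?a * (t - ?Y)\<bar> \<le> K^3 * t\<^sup>2 * t\<^sup>2"
    using n1 n2 abs_triangle_ineq[of "t * (sin ?a - ?a)" "?a * (t - ?Y)"] by linarith
  have "\<bar>t\<bar> * (\<bar>t\<bar> / 2) \<le> \<bar>t\<bar> * \<bar>?Y\<bar>" using abs_Yof_ge[OF t] by (rule mult_left_mono) auto
  hence den: "\<bar>t * ?Y\<bar> \<ge> t\<^sup>2 / 2" by (simp add: abs_mult power2_eq_square)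
  have t2: "t\<^sup>2 > 0" using False by simp
  have "\<bar>sin_defect d u t\<bar> = \<bar>t * (sin ?a - ?a) + ?a * (t - ?Y)\<bar> / \<bar>t * ?Y\<bar>" by (simp add: eq abs_divide)
  also have "\<dots> \<le> (K^3 * t\<^sup>2 * t\<^sup>2) / (t\<^sup>2 / 2)"
    using num den t2 admissibleD by (intro frac_le) auto
  also have "\<dots> = 2 * K^3 * t\<^sup>2" using t2 by (simp add: field_simps)
  finally show ?thesis .
qed (simp add: sin_defect_def)

lemma continuous_on_sin_defect: "continuous_on {-d..d} (sin_defect d u)"
  unfolding continuous_on_eq_continuous_within
proof
  fix t assume t: "t \<in> {-d..d}"
  show "continuous (at t within {-d..d}) (sin_defect d u)"
  proof (cases "t = 0")
    case False
    have "continuous (at t within {-d..d}) (\<lambda>t. sin (u t) / Yof d u t - u t / t)"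
      using Yof_nonzero[OF t False] False continuous_u continuous_on_Yof t
      by (intro continuous_intros) (auto simp: continuous_on_eq_continuous_within)
    thus ?thesis by (simp add: sin_defect_def[abs_def])
  next
    case True
    show ?thesis unfolding True
      by (rule continuous_within_0_if_abs_le[where k=2 and C="2 * K^3"])
         (use abs_sin_defect_le in \<open>simp_all add: sin_defect_def[of d u 0]\<close>)
  qed
qed

lemma continuous_on_rhs: "continuous_on {-d..d} (rhs d u)"
  unfolding rhs_def[abs_def] regular_rhs_def
  by (intro continuous_intros continuous_on_sin_defect continuous_on_subset[OF continuous_H]
      continuous_on_other_terms continuous_on_Xof continuous_on_Yof continuous_u near_x0_Xof_Yof) auto

lemma abs_rhs_le: "t \<in> {-d..d} \<Longrightarrow> \<bar>rhs d u t\<bar> \<le> 1 + rhs_bound"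
proof -
  assume t: "t \<in> {-d..d}"
  have "t\<^sup>2 \<le> d\<^sup>2" using t by (simp add: abs_le_square_iff[symmetric] abs_le_iff)
  hence "2 * K^3 * t\<^sup>2 \<le> 2 * K^3 * d\<^sup>2" using admissibleD by (intro mult_left_mono) auto
  hence "\<bar>sin_defect d u t\<bar> \<le> 2 * K^3 * d\<^sup>2" using abs_sin_defect_le[OF t] by linarith
  hence "\<bar>Ni * sin_defect d u t\<bar> \<le> Ni * (2 * K^3 * d\<^sup>2)"
    by (simp add: abs_mult Ni_def mult_left_mono)
  hence "\<bar>Ni * sin_defect d u t\<bar> \<le> 1" using admissibleD(6) by linarith
  moreover have "\<bar>regular_rhs t (Xof d u t) (Yof d u t) (u t)\<bar> \<le> rhs_bound"
    using abs_regular_rhs_le[OF near_x0_Xof_Yof[OF t]] t admissibleD(2) by auto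
  ultimately show ?thesis unfolding rhs_def by linarith
qed

lemma has_real_derivative_moment:
  "\<tau> \<in> {-d..d} \<Longrightarrow> (moment d u has_real_derivative \<tau>^nj i * rhs d u \<tau>) (at \<tau> within {-d..d})"
  unfolding moment_def[abs_def] by (rule has_real_derivative_prim) (intro continuous_intros continuous_on_rhs)

lemma moment_0 [simp]: "moment d u 0 = 0"
  by (simp add: moment_def)

lemma abs_angle_map_le: "s \<in> {-d..d} \<Longrightarrow> \<bar>angle_map d u s\<bar> \<le> (1 + rhs_bound) * \<bar>s\<bar>"
  unfolding angle_map_def by (rule abs_weighted_quotient_le[OF has_real_derivative_moment moment_0 abs_rhs_le])

lemma continuous_on_angle_map: "continuous_on {-d..d} (angle_map d u)"
  unfolding continuous_on_eq_continuous_within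
proof
  fix t assume t: "t \<in> {-d..d}"
  show "continuous (at t within {-d..d}) (angle_map d u)"
  proof (cases "t = 0")
    case False
    have "continuous (at t within {-d..d}) (moment d u)"
      using DERIV_continuous_on[OF has_real_derivative_moment] t
      by (simp add: continuous_on_eq_continuous_within)
    hence "continuous (at t within {-d..d}) (\<lambda>t. moment d u t / t ^ nj i)"
      using False by (intro continuous_intros) auto
    thus ?thesis by (simp add: angle_map_def[abs_def])
  next
    case True
    show ?thesis unfolding True
      by (rule continuous_within_0_if_abs_le[where k=1 and C="1 + rhs_bound"])
         (use abs_angle_map_le in \<open>simp_all add: angle_map_def[of d u 0]\<close>)
  qed
qed

lemma has_vector_derivative_curve:
  assumes "t \<in> {-d..d}"
  shows "(curve d u has_vector_derivative evec (\<theta>0 + u t)) (at t within {-d..d})"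
proof -
  have "(curve d u has_vector_derivative (Xof d u t *\<^sub>R 0 + (- sin (u t)) *\<^sub>R dir)
      + (Yof d u t *\<^sub>R 0 + cos (u t) *\<^sub>R nor)) (at t within {-d..d})"
    unfolding curve_def[abs_def]
    using has_real_derivative_Xof[OF assms] has_real_derivative_Yof[OF assms]
    by (intro has_vector_derivative_add has_vector_derivative_scaleR has_vector_derivative_const)
       (simp_all add: has_real_derivative_iff_has_vector_derivative)
  thus ?thesis by (simp add: \<theta>0_def evec_add_pi_half_add dir_def nor_def)
qed

lemma curve_0 [simp]: "curve d u 0 = x0"
  by (simp add: curve_def x0_eq[symmetric])

lemma curve_denominator_nonzero:
  assumes s: "s \<in> {-d..d}" "s \<noteq> 0" and j: "j \<in> J"
  shows "perp (evec (\<phi> j)) \<bullet> curve d u s \<noteq> 0"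
proof (cases "j = i")
  case True
  thus ?thesis using Yof_nonzero[OF s] by (simp add: curve_def nor_eq[symmetric] inner_add_right)
next
  case False
  thus ?thesis using denominator_ge_\<mu>[OF _ near_x0_Xof_Yof[OF s(1)]] \<mu>_pos j
    unfolding curve_def by force
qed

lemma eq_curve_if_velocity:
  assumes "d < e" "\<And>t. t \<in> {-e<..<e} \<Longrightarrow> (x has_vector_derivative evec (\<theta>0 + u t)) (at t)"
    and "x 0 = x0" and s: "s \<in> {-d..d}"
  shows "x s = curve d u s"
proof -
  have "((\<lambda>t. x t - curve d u t) has_vector_derivative 0) (at t within {-d..d})" if "t \<in> {-d..d}" for t
    using has_vector_derivative_diff[OF has_vector_derivative_at_within[OF assms(2)]
        has_vector_derivative_curve[OF that]] that assms(1) by auto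
  then obtain C where "\<And>t. t \<in> {-d..d} \<Longrightarrow> x t - curve d u t = C"
    using has_vector_derivative_zero_constant[of "{-d..d}"] by blast
  from this[of 0] this[OF s] show ?thesis using admissibleD(1) assms(3) by simp
qed

lemma fixpoint_if_angular_speed:
  assumes "\<And>t. t \<in> {-d<..<d} \<Longrightarrow> t \<noteq> 0 \<Longrightarrow> (u has_real_derivative rhs d u t - Ni * u t / t) (at t)"
    and s: "s \<in> {-d..d}"
  shows "u s = angle_map d u s"
proof -
  have "s ^ nj i * u s = moment d u s"
    by (rule weighted_primitive_eq[OF continuous_u u_0 _ has_real_derivative_moment moment_0 s])
       (use assms(1) in \<open>simp add: Ni_def\<close>)
  thus ?thesis using u_0 by (cases "s = 0") (auto simp: angle_map_def field_simps)
qed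

end

locale angle_pair = ivp +
  A: angle J \<phi> nj n H i x0 K d u1 + B: angle J \<phi> nj n H i x0 K d u2
  for K d :: real and u1 u2 :: "real \<Rightarrow> real" +
  fixes D :: real
  assumes abs_diff_le: "\<And>t. t \<in> {-d..d} \<Longrightarrow> \<bar>u1 t - u2 t\<bar> \<le> D"
begin

lemma D_nonneg: "D \<ge> 0"
  using abs_diff_le[of 0] A.admissibleD(1) by auto

lemma abs_Yof_diff_le:
  assumes t: "t \<in> {-d..d}"
  shows "\<bar>Yof d u1 t - Yof d u2 t\<bar> \<le> D * \<bar>t\<bar>"
proof -
  have "\<bar>(Yof d u1 t - Yof d u2 t) - (Yof d u1 0 - Yof d u2 0)\<bar> \<le> D * \<bar>t\<bar>"
  proof (rule abs_diff_at_0_le_deriv_bound[where f'="\<lambda>\<tau>. cos (u1 \<tau>) - cos (u2 \<tau>)"])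
    show "\<And>\<tau>. \<tau> \<in> {-d..d} \<Longrightarrow> ((\<lambda>t. Yof d u1 t - Yof d u2 t) has_real_derivative
        cos (u1 \<tau>) - cos (u2 \<tau>)) (at \<tau> within {-d..d})"
      by (intro DERIV_diff A.has_real_derivative_Yof B.has_real_derivative_Yof)
    fix \<tau> assume "\<bar>\<tau>\<bar> \<le> \<bar>t\<bar>"
    hence "\<tau> \<in> {-d..d}" using t by auto
    thus "\<bar>cos (u1 \<tau>) - cos (u2 \<tau>)\<bar> \<le> D" using abs_cos_diff_le[of "u1 \<tau>" "u2 \<tau>"] abs_diff_le by force
  qed fact
  thus ?thesis by simp
qed

lemma abs_Xof_diff_le:
  assumes t: "t \<in> {-d..d}"
  shows "\<bar>Xof d u1 t - Xof d u2 t\<bar> \<le> D * \<bar>t\<bar>"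
proof -
  have "\<bar>(Xof d u1 t - Xof d u2 t) - (Xof d u1 0 - Xof d u2 0)\<bar> \<le> D * \<bar>t\<bar>"
  proof (rule abs_diff_at_0_le_deriv_bound[where f'="\<lambda>\<tau>. - sin (u1 \<tau>) - - sin (u2 \<tau>)"])
    show "\<And>\<tau>. \<tau> \<in> {-d..d} \<Longrightarrow> ((\<lambda>t. Xof d u1 t - Xof d u2 t) has_real_derivative
        - sin (u1 \<tau>) - - sin (u2 \<tau>)) (at \<tau> within {-d..d})"
      by (intro DERIV_diff A.has_real_derivative_Xof B.has_real_derivative_Xof)
    fix \<tau> assume "\<bar>\<tau>\<bar> \<le> \<bar>t\<bar>"
    hence "\<tau> \<in> {-d..d}" using t by auto
    thus "\<bar>- sin (u1 \<tau>) - - sin (u2 \<tau>)\<bar> \<le> D"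
      using abs_sin_diff_le[of "u2 \<tau>" "u1 \<tau>"] abs_diff_le[of \<tau>] by (simp add: abs_minus_commute)
  qed fact
  thus ?thesis by simp
qed

lemma abs_sin_defect_diff_common_Y_le:
  assumes t: "t \<in> {-d..d}" and t0: "t \<noteq> 0"
  shows "\<bar>(sin (u1 t) - sin (u2 t)) / Yof d u1 t - (u1 t - u2 t) / t\<bar> \<le> 2 * K\<^sup>2 * D"
proof -
  let ?a1 = "u1 t" and ?a2 = "u2 t" and ?Y = "Yof d u1 t"
  have eq: "(sin ?a1 - sin ?a2) / ?Y - (?a1 - ?a2) / t
      = (t * ((sin ?a1 - ?a1) - (sin ?a2 - ?a2)) + (?a1 - ?a2) * (t - ?Y)) / (t * ?Y)"
    using A.Yof_nonzero[OF t t0] t0 by (simp add: field_simps)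
  have dd: "\<bar>?a1 - ?a2\<bar> \<le> D" by (rule abs_diff_le[OF t])
  have "\<bar>(sin ?a1 - ?a1) - (sin ?a2 - ?a2)\<bar> \<le> (K * \<bar>t\<bar>)\<^sup>2 / 2 * D"
    using abs_sin_minus_id_diff_le[OF A.abs_u_le[OF t] B.abs_u_le[OF t]] dd
    by (meson order_trans mult_left_mono zero_le_divide_iff zero_le_power2 zero_le_numeral)
  hence n1: "\<bar>t * ((sin ?a1 - ?a1) - (sin ?a2 - ?a2))\<bar> \<le> \<bar>t\<bar> * ((K * \<bar>t\<bar>)\<^sup>2 / 2 * D)"
    unfolding abs_mult by (rule mult_left_mono) simp
  have "\<bar>?a1 - ?a2\<bar> * \<bar>t - ?Y\<bar> \<le> D * (K\<^sup>2 / 2 * \<bar>t\<bar> ^ 3)"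
    using A.abs_Yof_minus_id_le[OF t] dd D_nonneg by (intro mult_mono) (auto simp: abs_minus_commute)
  hence n2: "\<bar>(?a1 - ?a2) * (t - ?Y)\<bar> \<le> D * (K\<^sup>2 / 2 * \<bar>t\<bar> ^ 3)" by (simp add: abs_mult)
  have "\<bar>t\<bar> * ((K * \<bar>t\<bar>)\<^sup>2 / 2 * D) + D * (K\<^sup>2 / 2 * \<bar>t\<bar> ^ 3) = K\<^sup>2 * D * \<bar>t\<bar> * t\<^sup>2"
    by (simp add: power2_eq_square power3_eq_cube algebra_simps)
  hence num: "\<bar>t * ((sin ?a1 - ?a1) - (sin ?a2 - ?a2)) + (?a1 - ?a2) * (t - ?Y)\<bar> \<le> K\<^sup>2 * D * \<bar>t\<bar> * t\<^sup>2"
    using n1 n2 abs_triangle_ineq[of "t * ((sin ?a1 - ?a1) - (sin ?a2 - ?a2))" "(?a1 - ?a2) * (t - ?Y)"]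
    by linarith
  have "\<bar>t\<bar> * (\<bar>t\<bar> / 2) \<le> \<bar>t\<bar> * \<bar>?Y\<bar>" using A.abs_Yof_ge[OF t] by (rule mult_left_mono) auto
  hence den: "\<bar>t * ?Y\<bar> \<ge> t\<^sup>2 / 2" by (simp add: abs_mult power2_eq_square)
  have t2: "t\<^sup>2 > 0" using t0 by simp
  have "\<bar>(sin ?a1 - sin ?a2) / ?Y - (?a1 - ?a2) / t\<bar> \<le> (K\<^sup>2 * D * \<bar>t\<bar> * t\<^sup>2) / (t\<^sup>2 / 2)"
    unfolding eq abs_divide using num den t2 D_nonneg by (intro frac_le) auto
  also have "\<dots> = 2 * K\<^sup>2 * D * \<bar>t\<bar>" using t2 by (simp add: field_simps)
  also have "\<dots> \<le> 2 * K\<^sup>2 * D * 1"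
    using t A.admissibleD(2) D_nonneg by (intro mult_left_mono) auto
  finally show ?thesis by simp
qed

lemma abs_sin_divide_Yof_diff_le:
  assumes t: "t \<in> {-d..d}" and t0: "t \<noteq> 0"
  shows "\<bar>sin (u2 t) / Yof d u1 t - sin (u2 t) / Yof d u2 t\<bar> \<le> 4 * K * D"
proof -
  let ?Y1 = "Yof d u1 t" and ?Y2 = "Yof d u2 t"
  have eq: "sin (u2 t) / ?Y1 - sin (u2 t) / ?Y2 = sin (u2 t) * (?Y2 - ?Y1) / (?Y1 * ?Y2)"
    using A.Yof_nonzero[OF t t0] B.Yof_nonzero[OF t t0] by (simp add: field_simps)
  have "\<bar>sin (u2 t)\<bar> \<le> K * \<bar>t\<bar>" using abs_sin_x_le_abs_x[of "u2 t"] B.abs_u_le[OF t] by linarith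
  hence num: "\<bar>sin (u2 t) * (?Y2 - ?Y1)\<bar> \<le> (K * \<bar>t\<bar>) * (D * \<bar>t\<bar>)"
    unfolding abs_mult using abs_Yof_diff_le[OF t] A.admissibleD(3)
    by (intro mult_mono) (auto simp: abs_minus_commute)
  have den: "\<bar>?Y1 * ?Y2\<bar> \<ge> (\<bar>t\<bar>/2) * (\<bar>t\<bar>/2)"
    unfolding abs_mult by (rule mult_mono[OF A.abs_Yof_ge[OF t] B.abs_Yof_ge[OF t]]) auto
  have "\<bar>sin (u2 t) * (?Y2 - ?Y1) / (?Y1 * ?Y2)\<bar> \<le> ((K * \<bar>t\<bar>) * (D * \<bar>t\<bar>)) / ((\<bar>t\<bar>/2) * (\<bar>t\<bar>/2))"
    unfolding abs_divide using num den t0 A.admissibleD(3) D_nonneg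
    by (intro frac_le) (auto simp: zero_less_mult_iff)
  also have "\<dots> = 4 * K * D" using t0 by (simp add: field_simps)
  finally show ?thesis unfolding eq .
qed

lemma abs_sin_defect_diff_le:
  assumes t: "t \<in> {-d..d}"
  shows "\<bar>sin_defect d u1 t - sin_defect d u2 t\<bar> \<le> (2 * K\<^sup>2 + 4 * K) * D"
proof (cases "t = 0")
  case False
  have "sin_defect d u1 t - sin_defect d u2 t
      = ((sin (u1 t) - sin (u2 t)) / Yof d u1 t - (u1 t - u2 t) / t)
        + (sin (u2 t) / Yof d u1 t - sin (u2 t) / Yof d u2 t)"
    by (simp add: sin_defect_def diff_divide_distrib)
  thus ?thesis
    using abs_sin_defect_diff_common_Y_le[OF t False] abs_sin_divide_Yof_diff_le[OF t False]
    by (simp add: algebra_simps)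
qed (use D_nonneg A.admissibleD(3) in \<open>simp add: sin_defect_def\<close>)

lemma abs_rhs_diff_le:
  assumes t: "t \<in> {-d..d}"
  shows "\<bar>rhs d u1 t - rhs d u2 t\<bar> \<le> lip_const K * D"
proof -
  have "\<bar>Xof d u1 t - Xof d u2 t\<bar> + \<bar>Yof d u1 t - Yof d u2 t\<bar> + \<bar>u1 t - u2 t\<bar> \<le> 3 * D"
  proof -
    have "\<bar>t\<bar> \<le> 1" using t A.admissibleD(2) by auto
    hence "D * \<bar>t\<bar> \<le> D" using D_nonneg by (simp add: mult_left_le)
    thus ?thesis using abs_Xof_diff_le[OF t] abs_Yof_diff_le[OF t] abs_diff_le[OF t] by linarith
  qed
  hence "\<bar>other_terms (Xof d u1 t) (Yof d u1 t) (u1 t) - other_terms (Xof d u2 t) (Yof d u2 t) (u2 t)\<bar>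
      \<le> other_lip * (3 * D)"
    using abs_other_terms_diff_le[OF A.near_x0_Xof_Yof[OF t] B.near_x0_Xof_Yof[OF t]]
      other_lip_nonneg by (meson mult_left_mono order_trans)
  moreover have "\<bar>Ni * (sin_defect d u1 t - sin_defect d u2 t)\<bar> \<le> Ni * ((2 * K\<^sup>2 + 4 * K) * D)"
    using abs_sin_defect_diff_le[OF t] by (simp add: abs_mult Ni_def mult_left_mono)
  moreover have "rhs d u1 t - rhs d u2 t = - Ni * (sin_defect d u1 t - sin_defect d u2 t) +
      (other_terms (Xof d u1 t) (Yof d u1 t) (u1 t) - other_terms (Xof d u2 t) (Yof d u2 t) (u2 t))"
    by (simp add: rhs_def regular_rhs_def algebra_simps)
  ultimately show ?thesis unfolding lip_const_def by (simp add: algebra_simps)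
qed

lemma abs_angle_map_diff_le:
  assumes s: "s \<in> {-d..d}"
  shows "\<bar>angle_map d u1 s - angle_map d u2 s\<bar> \<le> lip_const K * D * \<bar>s\<bar>"
proof -
  have "\<bar>(moment d u1 s - moment d u2 s) / s ^ nj i\<bar> \<le> lip_const K * D * \<bar>s\<bar>"
  proof (rule abs_weighted_quotient_le[where g="\<lambda>\<tau>. rhs d u1 \<tau> - rhs d u2 \<tau>"])
    fix \<tau> assume t: "\<tau> \<in> {-d..d}"
    show "((\<lambda>s. moment d u1 s - moment d u2 s) has_real_derivative
        \<tau>^nj i * (rhs d u1 \<tau> - rhs d u2 \<tau>)) (at \<tau> within {-d..d})"
      using DERIV_diff[OF A.has_real_derivative_moment[OF t] B.has_real_derivative_moment[OF t]]
      by (simp add: right_diff_distrib)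
    show "\<bar>rhs d u1 \<tau> - rhs d u2 \<tau>\<bar> \<le> lip_const K * D" by (rule abs_rhs_diff_le[OF t])
  qed (use s in simp_all)
  thus ?thesis by (simp add: angle_map_def diff_divide_distrib)
qed

lemma abs_angle_map_diff_le_half:
  assumes s: "s \<in> {-d..d}"
  shows "\<bar>angle_map d u1 s - angle_map d u2 s\<bar> \<le> D / 2"
proof -
  have "\<bar>angle_map d u1 s - angle_map d u2 s\<bar> \<le> lip_const K * D * \<bar>s\<bar>"
    by (rule abs_angle_map_diff_le[OF s])
  also have "\<dots> \<le> lip_const K * D * d"
    using s lip_const_nonneg[of K] A.admissibleD(3) D_nonneg by (intro mult_left_mono) auto
  also have "\<dots> \<le> D / 2"
    using A.admissibleD(7) D_nonneg mult_right_mono[of "d * lip_const K" "1/2" D] by (simp add: mult_ac)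
  finally show ?thesis .
qed

end

context ivp
begin

lemma angle_pairI:
  assumes "admissible K d" "continuous_on {-d..d} u1" "lin_bounded K d u1"
    "continuous_on {-d..d} u2" "lin_bounded K d u2" "\<And>t. t \<in> {-d..d} \<Longrightarrow> \<bar>u1 t - u2 t\<bar> \<le> D"
  shows "angle_pair J \<phi> nj H i x0 K d u1 u2 D"
  using assms by unfold_locales auto

lemma angle_fixpoint_unique:
  assumes adm: "admissible K d"
    and "continuous_on {-d..d} u1" "lin_bounded K d u1" "\<And>s. s \<in> {-d..d} \<Longrightarrow> u1 s = angle_map d u1 s"
    and "continuous_on {-d..d} u2" "lin_bounded K d u2" "\<And>s. s \<in> {-d..d} \<Longrightarrow> u2 s = angle_map d u2 s"
    and s: "s \<in> {-d..d}"
  shows "u1 s = u2 s"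
proof -
  have d: "0 \<le> d" using adm by (simp add: admissible_def)
  have "continuous_on {-d..d} (\<lambda>t. \<bar>u1 t - u2 t\<bar>)" by (intro continuous_intros assms)
  then obtain tm where tm: "tm \<in> {-d..d}" and max: "\<And>t. t \<in> {-d..d} \<Longrightarrow> \<bar>u1 t - u2 t\<bar> \<le> \<bar>u1 tm - u2 tm\<bar>"
    using continuous_attains_sup[of "{-d..d}" "\<lambda>t. \<bar>u1 t - u2 t\<bar>"] d by auto
  let ?D = "\<bar>u1 tm - u2 tm\<bar>"
  interpret angle_pair J \<phi> nj n H i x0 K d u1 u2 ?D
    by (rule angle_pairI) (use assms max in auto)
  have "?D \<le> ?D / 2" using abs_angle_map_diff_le_half[OF tm] assms(4,7) tm by simp
  hence "?D = 0" by simp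
  thus ?thesis using max[OF s] by simp
qed

definition clamp :: "real \<Rightarrow> real \<Rightarrow> real" where
  "clamp d s = max (-d) (min d s)"

text \<open>Clamping extends the angle map, which only matters on [-d, d], to a bounded continuous
  function on the real line, so that Banach's fixed point theorem applies in the complete
  space of such functions.\<close>

definition "angle_map_bcontfun d w = Bcontfun (\<lambda>s. angle_map d (apply_bcontfun w) (clamp d s))"

lemma apply_angle_map_bcontfun:
  assumes adm: "admissible K d" and w: "lin_bounded K d (apply_bcontfun w)"
  shows "apply_bcontfun (angle_map_bcontfun d w) = (\<lambda>s. angle_map d (apply_bcontfun w) (clamp d s))"
proof -
  interpret angle J \<phi> nj n H i x0 K d "apply_bcontfun w"
    by unfold_locales (use adm w in auto)
  have clamp: "clamp d s \<in> {-d..d}" for s using admissibleD(1) by (auto simp: clamp_def)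
  have "(\<lambda>s. angle_map d (apply_bcontfun w) (clamp d s)) \<in> bcontfun"
  proof (rule bcontfun_normI)
    show "continuous_on UNIV (\<lambda>s. angle_map d (apply_bcontfun w) (clamp d s))"
      unfolding clamp_def
      by (rule continuous_on_compose2[OF continuous_on_angle_map])
         (use admissibleD(1) in \<open>auto intro!: continuous_intros\<close>)
    fix s
    have "\<bar>angle_map d (apply_bcontfun w) (clamp d s)\<bar> \<le> (1 + rhs_bound) * \<bar>clamp d s\<bar>"
      by (rule abs_angle_map_le[OF clamp])
    also have "\<dots> \<le> (1 + rhs_bound) * d"
      using clamp[of s] rhs_bound_nonneg by (intro mult_left_mono) auto
    finally show "norm (angle_map d (apply_bcontfun w) (clamp d s)) \<le> (1 + rhs_bound) * d" by simp
  qed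
  thus ?thesis by (simp add: angle_map_bcontfun_def Bcontfun_inverse)
qed

lemma closed_lin_bounded: "closed {w :: real \<Rightarrow>\<^sub>C real. lin_bounded K d (apply_bcontfun w)}"
proof -
  have "continuous_on UNIV (\<lambda>w :: real \<Rightarrow>\<^sub>C real. apply_bcontfun w t)" for t
    unfolding continuous_on_iff by (metis dist_bounded le_less_trans)
  hence "closed {w :: real \<Rightarrow>\<^sub>C real. \<forall>t. t \<in> {-d..d} \<longrightarrow> \<bar>apply_bcontfun w t\<bar> \<le> K * \<bar>t\<bar>}"
    by (intro closed_Collect_all closed_Collect_imp open_Collect_const closed_Collect_le
        continuous_on_const continuous_intros)
  thus ?thesis unfolding lin_bounded_def Ball_def .
qed

lemma angle_map_bcontfun_lin_bounded:
  assumes adm: "admissible K d" and K: "1 + rhs_bound \<le> K" and w: "lin_bounded K d (apply_bcontfun w)"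
  shows "lin_bounded K d (apply_bcontfun (angle_map_bcontfun d w))"
proof -
  interpret angle J \<phi> nj n H i x0 K d "apply_bcontfun w"
    by unfold_locales (use adm w in auto)
  have "\<bar>angle_map d (apply_bcontfun w) t\<bar> \<le> K * \<bar>t\<bar>" if "t \<in> {-d..d}" for t
    using abs_angle_map_le[OF that] K by (meson abs_ge_zero mult_right_mono order_trans)
  thus ?thesis by (simp add: lin_bounded_def apply_angle_map_bcontfun[OF adm w] clamp_def)
qed

lemma dist_angle_map_bcontfun_le:
  assumes adm: "admissible K d"
    and w: "lin_bounded K d (apply_bcontfun w1)" "lin_bounded K d (apply_bcontfun w2)"
  shows "dist (angle_map_bcontfun d w1) (angle_map_bcontfun d w2) \<le> 1/2 * dist w1 w2"
proof (rule dist_bound)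
  interpret angle_pair J \<phi> nj n H i x0 K d "apply_bcontfun w1" "apply_bcontfun w2" "dist w1 w2"
    by (rule angle_pairI) (use adm w dist_bounded[of w1 _ w2] in \<open>auto simp: dist_real_def\<close>)
  fix s
  have "clamp d s \<in> {-d..d}" using A.admissibleD(1) by (auto simp: clamp_def)
  from abs_angle_map_diff_le_half[OF this]
  show "dist (angle_map_bcontfun d w1 s) (angle_map_bcontfun d w2 s) \<le> 1/2 * dist w1 w2"
    by (simp add: apply_angle_map_bcontfun[OF adm w(1)] apply_angle_map_bcontfun[OF adm w(2)] dist_real_def)
qed

lemma angle_fixpoint_exists:
  assumes adm: "admissible K d" and K: "1 + rhs_bound \<le> K"
  shows "\<exists>u. continuous_on UNIV u \<and> lin_bounded K d u \<and> (\<forall>s\<in>{-d..d}. u s = angle_map d u s)"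
proof -
  define S where "S = {w :: real \<Rightarrow>\<^sub>C real. lin_bounded K d (apply_bcontfun w)}"
  have "\<exists>!w\<in>S. angle_map_bcontfun d w = w"
  proof (rule Banach_fix[where c="1/2"])
    show "complete S" using closed_lin_bounded by (simp add: S_def complete_eq_closed)
    show "S \<noteq> {}" using adm by (auto intro!: exI[of _ 0] simp: S_def lin_bounded_def admissible_def)
    show "angle_map_bcontfun d ` S \<subseteq> S"
      using angle_map_bcontfun_lin_bounded[OF adm K] by (auto simp: S_def)
    show "dist (angle_map_bcontfun d w1) (angle_map_bcontfun d w2) \<le> 1/2 * dist w1 w2"
      if "w1 \<in> S" "w2 \<in> S" for w1 w2
      using dist_angle_map_bcontfun_le[OF adm] that by (simp add: S_def)
  qed simp_all
  then obtain w where w: "lin_bounded K d (apply_bcontfun w)" and fixed: "angle_map_bcontfun d w = w"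
    by (auto simp: S_def)
  have "apply_bcontfun w s = angle_map d (apply_bcontfun w) s" if "s \<in> {-d..d}" for s
    using fun_cong[OF arg_cong[OF fixed, of apply_bcontfun], of s] that
    by (simp add: apply_angle_map_bcontfun[OF adm w] clamp_def)
  thus ?thesis using w by (intro exI[of _ "apply_bcontfun w"]) auto
qed

end

section \<open>From fixed points to solutions and back\<close>

locale angle_fixpoint = angle +
  assumes fixpoint: "\<And>s. s \<in> {-d..d} \<Longrightarrow> u s = angle_map d u s"
begin

lemma moment_eq: "s \<in> {-d..d} \<Longrightarrow> moment d u s = s ^ nj i * u s"
  using fixpoint[of s] u_0 by (cases "s = 0") (simp_all add: angle_map_def)

definition "du s = (if s = 0 then rhs d u 0 / (nj i + 1) else rhs d u s - Ni * u s / s)"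

lemma u_over_id_tendsto: "((\<lambda>s. u s / s) \<longlongrightarrow> du 0) (at 0)"
proof -
  have "((\<lambda>s. moment d u s / s ^ Suc (nj i)) \<longlongrightarrow> du 0) (at 0)"
    unfolding du_def using weighted_quotient_tendsto[OF has_real_derivative_moment moment_0
        continuous_on_rhs admissibleD(1)] by simp
  moreover have "\<forall>\<^sub>F s in at 0. moment d u s / s ^ Suc (nj i) = u s / s"
    using eventually_at_ball[OF admissibleD(1)]
  proof eventually_elim
    case (elim s)
    hence "s \<in> {-d..d}" by (auto simp: dist_real_def)
    thus ?case by (cases "s = 0") (simp_all add: moment_eq)
  qed
  ultimately show ?thesis by (rule Lim_transform_eventually)
qed

lemma u_has_real_derivative:
  assumes s: "s \<in> {-d<..<d}"
  shows "(u has_real_derivative du s) (at s)"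
proof (cases "s = 0")
  case True
  thus ?thesis using u_over_id_tendsto by (simp add: has_field_derivative_iff u_0)
next
  case False
  have "(moment d u has_real_derivative s ^ nj i * rhs d u s) (at s)"
    using has_real_derivative_moment[of s] s at_within_Icc_at[of "-d" s d] by auto
  from has_real_derivative_weighted_quotient[OF this False]
  have "((\<lambda>t. moment d u t / t ^ nj i) has_real_derivative du s) (at s)"
    using s False by (simp add: moment_eq du_def Ni_def)
  thus ?thesis
    by (rule has_field_derivative_transform_within_open[OF _ _ s])
       (use u_0 in \<open>auto simp: moment_eq\<close>)
qed

lemma continuous_on_du: "continuous_on {-d<..<d} du"
proof (rule continuous_at_imp_continuous_on, intro ballI)
  fix s assume s: "s \<in> {-d<..<d}"
  have cont: "isCont (rhs d u) s" "isCont u s"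
    using continuous_on_interior[OF continuous_on_rhs, of s] continuous_on_interior[OF continuous_u, of s] s
    by auto
  show "isCont du s"
  proof (cases "s = 0")
    case True
    have "((\<lambda>t. rhs d u t - Ni * (u t / t)) \<longlongrightarrow> rhs d u 0 - Ni * du 0) (at 0)"
      using cont(1) True by (intro tendsto_intros u_over_id_tendsto) (simp add: isCont_def)
    moreover have "rhs d u 0 - Ni * du 0 = du 0" by (simp add: du_def Ni_def field_simps)
    ultimately have "((\<lambda>t. rhs d u t - Ni * (u t / t)) \<longlongrightarrow> du 0) (at 0)" by simp
    moreover have "\<forall>\<^sub>F t in at 0. rhs d u t - Ni * (u t / t) = du t"
      by (simp add: eventually_at_filter du_def)
    ultimately have "(du \<longlongrightarrow> du 0) (at 0)"
      by (rule Lim_transform_eventually)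
    thus ?thesis using True by (simp add: isCont_def)
  next
    case False
    have "isCont (\<lambda>t. rhs d u t - Ni * u t / t) s"
      using cont False by (intro continuous_intros) auto
    thus ?thesis
    proof (rule continuous_transform_within[where \<delta>="\<bar>s\<bar>"])
      fix t assume "dist t s < \<bar>s\<bar>"
      hence "t \<noteq> 0" by (auto simp: dist_real_def)
      thus "rhs d u t - Ni * u t / t = du t" by (simp add: du_def)
    qed (use False in simp_all)
  qed
qed

lemma is_local_solution: "is_local_solution J \<phi> nj n H i x0 d (curve d u)"
  unfolding is_local_solution_def
proof (intro conjI exI ballI impI)
  let ?v = "\<lambda>s. evec (\<theta>0 + u s)" and ?a = "\<lambda>s. du s *\<^sub>R perp (evec (\<theta>0 + u s))"
  fix s assume s: "s \<in> {-d<..<d}"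
  show "(curve d u has_vector_derivative ?v s) (at s)"
    using has_vector_derivative_curve[of s] s at_within_Icc_at[of "-d" s d] by auto
  show "(?v has_vector_derivative ?a s) (at s)"
    by (intro has_vector_derivative_evec DERIV_add[OF DERIV_const u_has_real_derivative[OF s], simplified])
  show "(norm (?v s))\<^sup>2 = 1" by simp
  assume s0: "s \<noteq> 0"
  show "perp (evec (\<phi> j)) \<bullet> curve d u s \<noteq> 0" if "j \<in> J" for j
    using curve_denominator_nonzero[OF _ s0 that] s by auto
  show "perp (?a s) \<bullet> ?v s + (\<Sum>j\<in>J. real (nj j) * (evec (\<phi> j) \<bullet> ?v s) / (perp (evec (\<phi> j)) \<bullet> curve d u s))
      = (real n - 1) * H s"
    unfolding ode_angle_form using rhs_sub_eq[of d u s] s0 by (simp add: du_def)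
next
  show "continuous_on {-d<..<d} (\<lambda>s. du s *\<^sub>R perp (evec (\<theta>0 + u s)))"
    unfolding perp_def evec_def
    by (intro continuous_intros continuous_on_du continuous_on_subset[OF continuous_u]) auto
qed (use admissibleD(1) u_0 in \<open>simp_all add: \<theta>0_def\<close>)

end

context ivp
begin

lemma local_solution_angle:
  assumes "is_local_solution J \<phi> nj n H i x0 \<epsilon> x"
  shows "\<exists>e>0. \<exists>U B. continuous_on {-e..e} U \<and> (\<forall>t\<in>{-e..e}. \<bar>U t\<bar> \<le> B * \<bar>t\<bar>) \<and>
    (\<forall>t\<in>{-e<..<e}. (x has_vector_derivative evec (\<theta>0 + U t)) (at t)) \<and>
    (\<forall>t\<in>{-e<..<e}. t \<noteq> 0 \<longrightarrow> (U has_real_derivative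
       Ni * (- sin (U t)) / (nor \<bullet> x t) + other_terms (dir \<bullet> x t) (nor \<bullet> x t) (U t) - (real n - 1) * H t) (at t))"
proof -
  from assms obtain v a where \<epsilon>: "\<epsilon> > 0"
    and der: "\<And>s. s \<in> {-\<epsilon><..<\<epsilon>} \<Longrightarrow> (x has_vector_derivative v s) (at s) \<and> (v has_vector_derivative a s) (at s)"
    and cont: "continuous_on {-\<epsilon><..<\<epsilon>} a" and v0: "v 0 = evec \<theta>0"
    and unit2: "\<And>s. s \<in> {-\<epsilon><..<\<epsilon>} \<Longrightarrow> (norm (v s))\<^sup>2 = 1"
    and ode: "\<And>s. s \<in> {-\<epsilon><..<\<epsilon>} \<Longrightarrow> s \<noteq> 0 \<Longrightarrow>
           perp (a s) \<bullet> v s + (\<Sum>j\<in>J. real (nj j) * (evec (\<phi> j) \<bullet> v s) / (perp (evec (\<phi> j)) \<bullet> x s)) = (real n - 1) * H s"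
    unfolding is_local_solution_def \<theta>0_def by blast
  have unit: "norm (v s) = 1" if "s \<in> {-\<epsilon><..<\<epsilon>}" for s
    using unit2[OF that] norm_ge_zero[of "v s"] by (auto simp: power2_eq_1_iff)
  define e where "e = \<epsilon> / 2"
  have e: "0 < e" "e < \<epsilon>" using \<epsilon> by (auto simp: e_def)
  have der_v: "(v has_vector_derivative a s) (at s)" if "s \<in> {-\<epsilon><..<\<epsilon>}" for s
    using der[OF that] by blast
  define c where "c t = perp (v t) \<bullet> a t" for t
  have sub: "{-e..e} \<subseteq> {-\<epsilon><..<\<epsilon>}" using e by auto
  have "continuous_on {-\<epsilon><..<\<epsilon>} v"
    using der_v by (intro continuous_at_imp_continuous_on ballI has_vector_derivative_continuous)
  hence cont_c: "continuous_on {-e..e} c"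
    unfolding c_def[abs_def] perp_def
    using continuous_on_subset[OF _ sub] cont by (intro continuous_intros) auto
  define U where "U = prim e c"
  have vU: "v t = evec (\<theta>0 + U t)" if "t \<in> {-e<..<e}" for t
    unfolding U_def c_def[abs_def]
    by (rule unit_field_eq_evec_angle[OF e der_v cont unit v0 that])
  have "continuous_on {-e..e} U" unfolding U_def by (rule continuous_on_prim[OF cont_c])
  moreover have "\<exists>B. \<forall>t\<in>{-e..e}. \<bar>U t\<bar> \<le> B * \<bar>t\<bar>"
    unfolding U_def by (rule exists_abs_prim_le[OF cont_c])
  moreover have "(x has_vector_derivative evec (\<theta>0 + U t)) (at t)" if t: "t \<in> {-e<..<e}" for t
    using der[of t] vU[OF t] t e by simp
  moreover have "(U has_real_derivative
       Ni * (- sin (U t)) / (nor \<bullet> x t) + other_terms (dir \<bullet> x t) (nor \<bullet> x t) (U t) - (real n - 1) * H t) (at t)"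
    if t: "t \<in> {-e<..<e}" and "t \<noteq> 0" for t
  proof -
    have t\<epsilon>: "t \<in> {-\<epsilon><..<\<epsilon>}" using t e by auto
    have a: "a t = c t *\<^sub>R perp (evec (\<theta>0 + U t))"
      using unit_field_derivative_eq[OF _ t\<epsilon> unit der_v[OF t\<epsilon>]] vU[OF t] by (simp add: c_def)
    from ode[OF t\<epsilon> \<open>t \<noteq> 0\<close>]
    have "c t = Ni * (- sin (U t)) / (nor \<bullet> x t) + other_terms (dir \<bullet> x t) (nor \<bullet> x t) (U t) - (real n - 1) * H t"
      by (simp only: a vU[OF t] ode_angle_form)
    thus ?thesis using has_real_derivative_prim_at[OF cont_c t] by (simp add: U_def)
  qed
  ultimately show ?thesis using e by blast
qed

lemma local_solution_exists: "\<exists>\<epsilon> x. is_local_solution J \<phi> nj n H i x0 \<epsilon> x"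
proof -
  define K where "K = 1 + rhs_bound"
  have K: "1 \<le> K" using rhs_bound_nonneg by (simp add: K_def)
  obtain d where adm: "admissible K d"
    using admissible_exists[OF K] by (metis order_refl)
  obtain u where u: "continuous_on UNIV u" "lin_bounded K d u" "\<forall>s\<in>{-d..d}. u s = angle_map d u s"
    using angle_fixpoint_exists[OF adm] by (auto simp: K_def)
  interpret angle_fixpoint J \<phi> nj n H i x0 K d u
    by unfold_locales (use adm u in \<open>auto intro: continuous_on_subset\<close>)
  show ?thesis using is_local_solution by blast
qed

lemma local_solution_fixpoint:
  assumes "is_local_solution J \<phi> nj n H i x0 \<epsilon> x"
  shows "\<exists>e>0. \<exists>B U. \<forall>K d. admissible K d \<and> d < e \<and> B \<le> K \<longrightarrow>
    angle_fixpoint J \<phi> nj n H i x0 K d U \<and> (\<forall>s\<in>{-d..d}. x s = curve d U s)"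
proof -
  obtain e U B where e: "0 < e" and U: "continuous_on {-e..e} U" "\<forall>t\<in>{-e..e}. \<bar>U t\<bar> \<le> B * \<bar>t\<bar>"
    and vel: "\<forall>t\<in>{-e<..<e}. (x has_vector_derivative evec (\<theta>0 + U t)) (at t)"
    and speed: "\<forall>t\<in>{-e<..<e}. t \<noteq> 0 \<longrightarrow> (U has_real_derivative Ni * (- sin (U t)) / (nor \<bullet> x t)
       + other_terms (dir \<bullet> x t) (nor \<bullet> x t) (U t) - (real n - 1) * H t) (at t)"
    using local_solution_angle[OF assms] by blast
  have "angle_fixpoint J \<phi> nj n H i x0 K d U \<and> (\<forall>s\<in>{-d..d}. x s = curve d U s)"
    if adm: "admissible K d" and d: "d < e" and BK: "B \<le> K" for K d
  proof -
    have "lin_bounded K d U"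
      unfolding lin_bounded_def
    proof
      fix t assume "t \<in> {-d..d}"
      hence "\<bar>U t\<bar> \<le> B * \<bar>t\<bar>" using U(2) d by auto
      also have "\<dots> \<le> K * \<bar>t\<bar>" using BK by (rule mult_right_mono) simp
      finally show "\<bar>U t\<bar> \<le> K * \<bar>t\<bar>" .
    qed
    moreover have "continuous_on {-d..d} U" using d by (intro continuous_on_subset[OF U(1)]) auto
    ultimately interpret angle J \<phi> nj n H i x0 K d U
      by unfold_locales (use adm in auto)
    have "x 0 = x0" using assms unfolding is_local_solution_def by blast
    hence x: "x s = curve d U s" if "s \<in> {-d..d}" for s
      by (intro eq_curve_if_velocity[OF d _ _ that]) (use vel in auto)
    have "\<And>s. s \<in> {-d..d} \<Longrightarrow> U s = angle_map d U s"
    proof (rule fixpoint_if_angular_speed)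
      fix t assume t: "t \<in> {-d<..<d}" "t \<noteq> 0"
      hence "t \<in> {-e<..<e}" using d by auto
      hence "(U has_real_derivative Ni * (- sin (U t)) / (nor \<bullet> x t)
          + other_terms (dir \<bullet> x t) (nor \<bullet> x t) (U t) - (real n - 1) * H t) (at t)"
        using speed t(2) by blast
      thus "(U has_real_derivative rhs d U t - Ni * U t / t) (at t)"
        using t x[of t] by (simp add: rhs_sub_eq)
    qed
    hence "angle_fixpoint J \<phi> nj n H i x0 K d U" by unfold_locales
    thus ?thesis using x by blast
  qed
  thus ?thesis using e by blast
qed

lemma local_solutions_agree:
  assumes "is_local_solution J \<phi> nj n H i x0 \<epsilon>1 x1" "is_local_solution J \<phi> nj n H i x0 \<epsilon>2 x2"
  shows "\<exists>\<delta>>0. \<forall>s\<in>{-\<delta><..<\<delta>}. x1 s = x2 s"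
proof -
  obtain e1 B1 U1 where "0 < e1"
    and fp1: "\<forall>K d. admissible K d \<and> d < e1 \<and> B1 \<le> K \<longrightarrow>
       angle_fixpoint J \<phi> nj n H i x0 K d U1 \<and> (\<forall>s\<in>{-d..d}. x1 s = curve d U1 s)"
    using local_solution_fixpoint[OF assms(1)] by blast
  obtain e2 B2 U2 where "0 < e2"
    and fp2: "\<forall>K d. admissible K d \<and> d < e2 \<and> B2 \<le> K \<longrightarrow>
       angle_fixpoint J \<phi> nj n H i x0 K d U2 \<and> (\<forall>s\<in>{-d..d}. x2 s = curve d U2 s)"
    using local_solution_fixpoint[OF assms(2)] by blast
  define K where "K = max 1 (max B1 B2)"
  obtain d0 where d0: "d0 > 0" "\<And>d. 0 < d \<and> d \<le> d0 \<Longrightarrow> admissible K d"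
    using admissible_exists[of K] by (auto simp: K_def)
  define d where "d = min d0 (min e1 e2 / 2)"
  have adm: "admissible K d" using d0 \<open>0 < e1\<close> \<open>0 < e2\<close> by (simp add: d_def)
  have "d < e1" "d < e2" using \<open>0 < e1\<close> \<open>0 < e2\<close> by (auto simp: d_def)
  moreover have "B1 \<le> K" "B2 \<le> K" by (auto simp: K_def)
  ultimately have A: "angle_fixpoint J \<phi> nj n H i x0 K d U1" and x1: "\<forall>s\<in>{-d..d}. x1 s = curve d U1 s"
    and B: "angle_fixpoint J \<phi> nj n H i x0 K d U2" and x2: "\<forall>s\<in>{-d..d}. x2 s = curve d U2 s"
    using fp1 fp2 adm by simp_all
  interpret A: angle_fixpoint J \<phi> nj n H i x0 K d U1 by (rule A)
  interpret B: angle_fixpoint J \<phi> nj n H i x0 K d U2 by (rule B)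
  have "U1 t = U2 t" if "t \<in> {-d..d}" for t
    using angle_fixpoint_unique[OF adm _ _ A.fixpoint _ _ B.fixpoint that]
      A.continuous_u A.lin_bounded B.continuous_u B.lin_bounded by blast
  hence "x1 s = x2 s" if "s \<in> {-d..d}" for s
    using x1 x2 that curve_cong[of d U1 U2 s] by simp
  thus ?thesis using A.admissibleD(1) by (intro exI[of _ d]) auto
qed

end

section \<open>The configurations I to V\<close>

lemma equally_spaced_lines_transversal:
  fixes i j :: int and k :: real
  assumes "\<phi> i = real_of_int i * pi / k" "\<phi> j = real_of_int j * pi / k" "i \<noteq> j" "\<bar>i - j\<bar> < k"
  shows "perp (evec (\<phi> j)) \<bullet> evec (\<phi> i) \<noteq> 0"
proof -
  have "\<phi> i - \<phi> j = real_of_int (i - j) * pi / k" by (simp add: assms(1,2) diff_divide_distrib left_diff_distrib)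
  thus ?thesis using sin_int_mult_pi_divide_neq_0[of "i - j" k] assms(3,4)
    by (simp add: inner_perp_evec_evec)
qed

lemma type_data_finite_transversal:
  assumes "type_data J \<phi> nj n" and i: "i \<in> J"
  shows "finite J" "\<And>j. j \<in> J \<Longrightarrow> j \<noteq> i \<Longrightarrow> perp (evec (\<phi> j)) \<bullet> evec (\<phi> i) \<noteq> 0"
proof -
  have equally_spaced: "perp (evec (\<phi> j)) \<bullet> evec (\<phi> i) \<noteq> 0"
    if "\<forall>j\<in>J. \<phi> j = real_of_int j * pi / k" "j \<in> J" "j \<noteq> i" "J \<subseteq> {a..b}" "b - a < k" for j a b k
  proof -
    have "i \<in> {a..b}" "j \<in> {a..b}" using that(2,4) i by auto
    hence "\<bar>i - j\<bar> \<le> b - a" by auto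
    hence "real_of_int \<bar>i - j\<bar> < k" using that(5) by linarith
    thus ?thesis using equally_spaced_lines_transversal[of \<phi> i k j] that(1-3) i by auto
  qed
  from assms(1) consider "J = {0}"
    | "J = {0, 1}" "\<phi> 0 = 0" "\<phi> 1 = pi / 2"
    | "J = {-1, 0, 1}" "\<forall>j\<in>J. \<phi> j = real_of_int j * pi / 3"
    | "J = {-1, 0, 1, 2}" "\<forall>j\<in>J. \<phi> j = real_of_int j * pi / 4"
    | "J = {-2..3}" "\<forall>j\<in>J. \<phi> j = real_of_int j * pi / 6"
    unfolding type_data_def by argo
  hence "finite J \<and> (\<forall>j\<in>J. j \<noteq> i \<longrightarrow> perp (evec (\<phi> j)) \<bullet> evec (\<phi> i) \<noteq> 0)"
  proof cases
    case 2
    show ?thesis using i unfolding 2(1) by (auto simp: inner_perp_evec_evec 2(2,3))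
  next
    case 3
    have "J \<subseteq> {-1..1}" using 3(1) by auto
    with equally_spaced[OF 3(2)] show ?thesis by (auto intro: finite_subset)
  next
    case 4
    have "J \<subseteq> {-1..2}" using 4(1) by auto
    with equally_spaced[OF 4(2)] show ?thesis by (auto intro: finite_subset)
  next
    case 5
    have "J \<subseteq> {-2..3}" using 5(1) by auto
    with equally_spaced[OF 5(2)] show ?thesis by (auto intro: finite_subset)
  qed (use i in auto)
  thus "finite J" "\<And>j. j \<in> J \<Longrightarrow> j \<noteq> i \<Longrightarrow> perp (evec (\<phi> j)) \<bullet> evec (\<phi> i) \<noteq> 0" by auto
qed

theorem proposition3p2:
  fixes J :: "int set" and \<phi> :: "int \<Rightarrow> real" and nj :: "int \<Rightarrow> nat" and n :: nat
    and H :: "real \<Rightarrow> real" and i :: int and x0 :: "real \<times> real"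
  assumes "type_data J \<phi> nj n"
    and "continuous_on UNIV H"
    and "i \<in> J"
    and "perp (evec (\<phi> i)) \<bullet> x0 = 0"
    and "x0 \<noteq> 0"
  shows "(\<exists>\<epsilon> x. is_local_solution J \<phi> nj n H i x0 \<epsilon> x) \<and>
         (\<forall>\<epsilon>1 x1 \<epsilon>2 x2. is_local_solution J \<phi> nj n H i x0 \<epsilon>1 x1 \<and>
                         is_local_solution J \<phi> nj n H i x0 \<epsilon>2 x2 \<longrightarrow>
            (\<exists>\<delta>>0. \<forall>s\<in>{-\<delta><..<\<delta>}. x1 s = x2 s))"
proof -
  interpret ivp J \<phi> nj n H i x0
    using assms type_data_finite_transversal[OF assms(1,3)] by unfold_locales auto
  show ?thesis using local_solution_exists local_solutions_agree by blast
qed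

end
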